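(* Let $H$ be a nonlocal vertex bialgebra, $U$ a nonlocal vertex (left) $H$-module-algebra, and $V$ a nonlocal vertex (left) $H$-comodule-algebra with coaction $\rho$. Define a linear map $R(x):V\otimes U\to U\otimes V\otimes\mathbb C((x))$ by $$R(x)(v\otimes u)=\sum_i Y(h_i,-x)u\otimes v_i\quad\text{where }\rho(v)=\sum_i h_i\otimes v_i .$$ Then $R(x)$ is a twisting operator for the pair $(U,V)$, and the smash product $U\sharp V$ coincides with the twisted tensor product $U\otimes_RV$ (same underlying space, vacuum and vertex operator map).
   Context: All vector spaces are over $\mathbb{C}$. A nonlocal vertex algebra is a vector space $V$ with a linear map $Y(\cdot,x):V\to \mathrm{Hom}(V,V((x)))$, $v\mapsto Y(v,x)=\sum_{n\in\mathbb Z}v_nx^{-n-1}$, and a vector $\mathbf 1\in V$ such that for all $v$: $Y(\mathbf 1,x)v=v$, $Y(v,x)\mathbf 1\in V[[x]]$, $\lim_{x\to0}Y(v,x)\mathbf 1=v$; and for all $u,v,w$ there is $k\ge0$ with $(x_0+x_2)^kY(u,x_0+x_2)Y(v,x_2)w=(x_0+x_2)^kY(Y(u,x_0)v,x_2)w$. Write $Y(x)(u\otimes v)=Y(u,x)v$. A module over a nonlocal vertex algebra $H$ is a vector space $W$ with $Y_W(\cdot,x):H\to\mathrm{Hom}(W,W((x)))$, $Y_W(\mathbf 1,x)=1_W$, and for $a,b\in H$, $w\in W$ some $l\ge0$ with $(x_0+x_2)^lY_W(a,x_0+x_2)Y_W(b,x_2)w=(x_0+x_2)^lY_W(Y(a,x_0)b,x_2)w$.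 Conventions: $f(x_1\pm x_2)$ for $f\in\mathbb C((x))$ is expanded in nonnegative powers of the second variable; $T^{ij}$ denotes $T$ acting on tensor factors $i,j$; maps are extended linearly over scalar series. A nonlocal vertex bialgebra is a nonlocal vertex algebra $H$ with a coalgebra structure $(\Delta,\varepsilon)$ such that $\varepsilon(\mathbf 1)=1$, $\varepsilon(Y(h,x)h')=\varepsilon(h)\varepsilon(h')$, $\Delta(\mathbf 1)=\mathbf 1\otimes\mathbf 1$, $\Delta(Y(h,x)h')=Y(\Delta(h),x)\Delta(h')$ (tensor product structure on $H\otimes H$). Write $\Delta(h)=\sum h^{(1)}\otimes h^{(2)}$. A nonlocal vertex $H$-module-algebra is a nonlocal vertex algebra $U$ with an $H$-module structure (vertex operators $Y(h,x)$) such that for $h\in H$, $u,u'\in U$: $Y(h,x)u\in U\otimes\mathbb C((x))$ (a finite sum), $Y(h,x)\mathbf 1=\varepsilon(h)\mathbf 1$, and $Y(h,x)Y(u,z)u'=\sum Y(Y(h^{(1)},x-z)u,z)Y(h^{(2)},x)u'$. A nonlocal vertex $H$-comodule-algebra is a nonlocal vertex algebra $V$ with $\rho:V\to H\otimes V$ making $V$ a left $H$-comodule ($(1\otimes\rho)\rho=(\Delta\otimes1)\rho$, $(\varepsilon\otimes1)\rho(v)=1\otimes v$) such that $\rho(\mathbf 1)=\mathbf 1\otimes\mathbf 1$ and $\rho(Y(v,x)v')=\sum_{i,j}Y(h_i,x)h'_j\otimes Y(v_i,x)v'_j$ whenever $\rho(v)=\sum_i h_i\otimes v_i$, $\rho(v')=\sum_j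 h'_j\otimes v'_j$. Smash product $U\sharp V$: the nonlocal vertex algebra on $U\otimes V$ with vacuum $\mathbf 1\otimes\mathbf 1$ and $Y_\sharp(u\otimes v,x)(u'\otimes v')=\sum_i Y(u,x)Y(h_i,x)u'\otimes Y(v_i,x)v'$ where $\rho(v)=\sum_ih_i\otimes v_i$. Twisting operator for $(U,V)$: a linear map $R(x):V\otimes U\to U\otimes V\otimes\mathbb C((x))$ such that $R(x)(v\otimes\mathbf 1)=\mathbf 1\otimes v$, $R(x)(\mathbf 1\otimes u)=u\otimes\mathbf 1$, $R(x_1)(1\otimes Y(x_2))=(Y(x_2)\otimes1)R^{23}(x_1)R^{12}(x_1+x_2)$ on $V\otimes U\otimes U$, and $R(x_1)(Y(x_2)\otimes 1)=(1\otimes Y(x_2))R^{12}(x_1-x_2)R^{23}(x_1)$ on $V\otimes V\otimes U$. Twisted tensor product $U\otimes_RV$: the space $U\otimes V$ with vacuum $\mathbf 1\otimes\mathbf 1$ and $Y_R(u\otimes v,x)(u'\otimes v')=\sum_j f_j(-x)Y(u,x)u'_j\otimes Y(v_j,x)v'$ where $R(x)(v\otimes u')=\sum_j u'_j\otimes v_j\otimes f_j(x)$. *)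

theory Defs
  imports Complex_Main "HOL-Library.Poly_Mapping" "HOL-Library.Groups_Big_Fun"
begin

section \<open>Vector spaces over C, modelled as free spaces on a basis type\<close>

type_synonym 'a vec = "'a \<Rightarrow>\<^sub>0 complex"

definition sc :: "complex \<Rightarrow> 'a vec \<Rightarrow> 'a vec" where
  "sc c v = Poly_Mapping.map (\<lambda>z. c * z) v"

definition bas :: "'a \<Rightarrow> 'a vec" where
  "bas a = Poly_Mapping.single a 1"

definition lmap :: "('a \<Rightarrow> 'b vec) \<Rightarrow> 'a vec \<Rightarrow> 'b vec" where
  "lmap f t = (\<Sum>a\<in>Poly_Mapping.keys t. sc (Poly_Mapping.lookup t a) (f a))"

definition lmap2 :: "('a \<Rightarrow> 'b \<Rightarrow> 'c vec) \<Rightarrow> 'a vec \<Rightarrow> 'b vec \<Rightarrow> 'c vec" where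
  "lmap2 f s t = lmap (\<lambda>a. lmap (\<lambda>b. f a b) t) s"

text \<open>tensor product: the tensor product of the free spaces on 'a and 'b is the free space on 'a \<times> 'b\<close>
definition tens :: "'a vec \<Rightarrow> 'b vec \<Rightarrow> ('a \<times> 'b) vec" where
  "tens u v = (\<Sum>a\<in>Poly_Mapping.keys u. \<Sum>b\<in>Poly_Mapping.keys v. sc (Poly_Mapping.lookup u a * Poly_Mapping.lookup v b) (bas (a, b)))"

definition rassoc :: "(('a \<times> 'b) \<times> 'c) vec \<Rightarrow> ('a \<times> ('b \<times> 'c)) vec" where
  "rassoc t = lmap (\<lambda>((a, b), c). bas (a, (b, c))) t"

definition lin :: "('a vec \<Rightarrow> 'b vec) \<Rightarrow> bool" where
  "lin f \<longleftrightarrow> (\<forall>a b c. f (a + b) = f a + f b \<and> f (sc c a) = sc c (f a))"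

definition linfun :: "('a vec \<Rightarrow> complex) \<Rightarrow> bool" where
  "linfun f \<longleftrightarrow> (\<forall>a b c. f (a + b) = f a + f b \<and> f (sc c a) = c * f a)"

text \<open>a series-valued map (coefficientwise), indexed by the exponents 'i\<close>
definition linS :: "('a vec \<Rightarrow> 'i \<Rightarrow> 'b vec) \<Rightarrow> bool" where
  "linS f \<longleftrightarrow> (\<forall>i. lin (\<lambda>a. f a i))"

definition bilin :: "('a vec \<Rightarrow> 'b vec \<Rightarrow> 'i \<Rightarrow> 'c vec) \<Rightarrow> bool" where
  "bilin Y \<longleftrightarrow> (\<forall>v. linS (\<lambda>u. Y u v)) \<and> (\<forall>u. linS (Y u))"

text \<open>A one-variable series F :: int \<Rightarrow> _ stands for \<Sum>n F n x^n.
  It is a Laurent series (in W((x))) iff its support is bounded below.\<close>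
definition laurent :: "(int \<Rightarrow> 'b::zero) \<Rightarrow> bool" where
  "laurent F \<longleftrightarrow> (\<exists>N. \<forall>n<N. F n = 0)"

text \<open>F lies in W \<otimes> C((x)) (a finite sum of vectors times scalar Laurent series)\<close>
definition fin_laurent :: "(int \<Rightarrow> 'b vec) \<Rightarrow> bool" where
  "fin_laurent F \<longleftrightarrow> (\<exists>(ws :: 'b vec list) (fs :: (int \<Rightarrow> complex) list).
      length fs = length ws \<and> (\<forall>f\<in>set fs. laurent f) \<and>
      (\<forall>n. F n = (\<Sum>i<length ws. sc ((fs ! i) n) (ws ! i))))"

definition delta0 :: "'b vec \<Rightarrow> int \<Rightarrow> 'b vec" where
  "delta0 w n = (if n = 0 then w else 0)"

text \<open>Two-variable series G :: int \<Rightarrow> int \<Rightarrow> _ stand for \<Sum>i j G i j x1^i x2^j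
  (resp. x0^i x2^j).\<close>

text \<open>multiplication by (x0 + x2)^k\<close>
definition mulpow :: "nat \<Rightarrow> (int \<Rightarrow> int \<Rightarrow> 'b vec) \<Rightarrow> int \<Rightarrow> int \<Rightarrow> 'b vec" where
  "mulpow k G i j = (\<Sum>l\<le>k. sc (of_nat (k choose l)) (G (i - int l) (j - int (k - l))))"

text \<open>Y1(u, x0 + x2) Y2(v, x2) w, with (x0+x2)^n expanded in nonnegative powers of x2\<close>
definition assoc_lhs :: "('a vec \<Rightarrow> 'b vec \<Rightarrow> int \<Rightarrow> 'b vec) \<Rightarrow> ('a vec \<Rightarrow> 'b vec \<Rightarrow> int \<Rightarrow> 'b vec)
     \<Rightarrow> 'a vec \<Rightarrow> 'a vec \<Rightarrow> 'b vec \<Rightarrow> int \<Rightarrow> int \<Rightarrow> 'b vec" where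
  "assoc_lhs Y1 Y2 u v w i j =
     Sum_any (\<lambda>k::nat. sc (of_int (i + int k) gchoose k) (Y1 u (Y2 v w (j - int k)) (i + int k)))"

text \<open>YW(YA(u, x0) v, x2) w\<close>
definition assoc_rhs :: "('a vec \<Rightarrow> 'a vec \<Rightarrow> int \<Rightarrow> 'a vec) \<Rightarrow> ('a vec \<Rightarrow> 'b vec \<Rightarrow> int \<Rightarrow> 'b vec)
     \<Rightarrow> 'a vec \<Rightarrow> 'a vec \<Rightarrow> 'b vec \<Rightarrow> int \<Rightarrow> int \<Rightarrow> 'b vec" where
  "assoc_rhs YA YW u v w i j = YW (YA u v i) w j"

text \<open>Y u v n is the coefficient of x^n in Y(u,x)v (i.e. u_{-n-1} v)\<close>
definition nonlocal_va :: "'a vec \<Rightarrow> ('a vec \<Rightarrow> 'a vec \<Rightarrow> int \<Rightarrow> 'a vec) \<Rightarrow> bool" where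
  "nonlocal_va vac Y \<longleftrightarrow>
     bilin Y \<and> (\<forall>u v. laurent (Y u v)) \<and>
     (\<forall>v. Y vac v = delta0 v) \<and>
     (\<forall>v. (\<forall>n<0. Y v vac n = 0) \<and> Y v vac 0 = v) \<and>
     (\<forall>u v w. \<exists>k. mulpow k (assoc_lhs Y Y u v w) = mulpow k (assoc_rhs Y Y u v w))"

definition nva_module :: "'a vec \<Rightarrow> ('a vec \<Rightarrow> 'a vec \<Rightarrow> int \<Rightarrow> 'a vec)
     \<Rightarrow> ('a vec \<Rightarrow> 'b vec \<Rightarrow> int \<Rightarrow> 'b vec) \<Rightarrow> bool" where
  "nva_module vac Y YW \<longleftrightarrow>
     bilin YW \<and> (\<forall>a w. laurent (YW a w)) \<and>
     (\<forall>w. YW vac w = delta0 w) \<and>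
     (\<forall>a b w. \<exists>l. mulpow l (assoc_lhs YW YW a b w) = mulpow l (assoc_rhs Y YW a b w))"

text \<open>tensor product vertex operator: Y(a\<otimes>b,x)(a'\<otimes>b') = Y1(a,x)a' \<otimes> Y2(b,x)b'\<close>
definition Ytens :: "('a vec \<Rightarrow> 'c vec \<Rightarrow> int \<Rightarrow> 'c vec) \<Rightarrow> ('b vec \<Rightarrow> 'd vec \<Rightarrow> int \<Rightarrow> 'd vec)
     \<Rightarrow> ('a \<times> 'b) vec \<Rightarrow> ('c \<times> 'd) vec \<Rightarrow> int \<Rightarrow> ('c \<times> 'd) vec" where
  "Ytens Y1 Y2 s t n = lmap2 (\<lambda>(a, b) (c, d).
      Sum_any (\<lambda>p::int. tens (Y1 (bas a) (bas c) p) (Y2 (bas b) (bas d) (n - p)))) s t"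

definition coalgebra :: "('h vec \<Rightarrow> ('h \<times> 'h) vec) \<Rightarrow> ('h vec \<Rightarrow> complex) \<Rightarrow> bool" where
  "coalgebra \<Delta> \<epsilon> \<longleftrightarrow> lin \<Delta> \<and> linfun \<epsilon> \<and>
     (\<forall>h. rassoc (lmap (\<lambda>(a, b). tens (\<Delta> (bas a)) (bas b)) (\<Delta> h))
          = lmap (\<lambda>(a, b). tens (bas a) (\<Delta> (bas b))) (\<Delta> h)) \<and>
     (\<forall>h. lmap (\<lambda>(a, b). sc (\<epsilon> (bas a)) (bas b)) (\<Delta> h) = h) \<and>
     (\<forall>h. lmap (\<lambda>(a, b). sc (\<epsilon> (bas b)) (bas a)) (\<Delta> h) = h)"

definition nonlocal_vertex_bialgebra :: "'h vec \<Rightarrow> ('h vec \<Rightarrow> 'h vec \<Rightarrow> int \<Rightarrow> 'h vec)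
     \<Rightarrow> ('h vec \<Rightarrow> ('h \<times> 'h) vec) \<Rightarrow> ('h vec \<Rightarrow> complex) \<Rightarrow> bool" where
  "nonlocal_vertex_bialgebra vac Y \<Delta> \<epsilon> \<longleftrightarrow>
     nonlocal_va vac Y \<and> coalgebra \<Delta> \<epsilon> \<and>
     \<epsilon> vac = 1 \<and>
     (\<forall>h h' n. \<epsilon> (Y h h' n) = (if n = 0 then \<epsilon> h * \<epsilon> h' else 0)) \<and>
     \<Delta> vac = tens vac vac \<and>
     (\<forall>h h' n. \<Delta> (Y h h' n) = Ytens Y Y (\<Delta> h) (\<Delta> h') n)"

text \<open>coefficient of x^a z^b in \<Sum> Y(Y(h1, x - z) u, z) Y(h2, x) u',
  with (x - z)^m expanded in nonnegative powers of z\<close>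
definition modalg_rhs :: "('u vec \<Rightarrow> 'u vec \<Rightarrow> int \<Rightarrow> 'u vec) \<Rightarrow> ('h vec \<Rightarrow> 'u vec \<Rightarrow> int \<Rightarrow> 'u vec)
     \<Rightarrow> ('h vec \<Rightarrow> ('h \<times> 'h) vec) \<Rightarrow> 'h vec \<Rightarrow> 'u vec \<Rightarrow> 'u vec \<Rightarrow> int \<Rightarrow> int \<Rightarrow> 'u vec" where
  "modalg_rhs YU YHU \<Delta> h u u' a b = lmap (\<lambda>(c, d).
      Sum_any (\<lambda>(m::int, k::nat). sc ((of_int m gchoose k) * (- 1) ^ k)
         (YU (YHU (bas c) u m) (YHU (bas d) u' (a - m + int k)) (b - int k)))) (\<Delta> h)"

definition module_algebra :: "'h vec \<Rightarrow> ('h vec \<Rightarrow> 'h vec \<Rightarrow> int \<Rightarrow> 'h vec)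
     \<Rightarrow> ('h vec \<Rightarrow> ('h \<times> 'h) vec) \<Rightarrow> ('h vec \<Rightarrow> complex)
     \<Rightarrow> 'u vec \<Rightarrow> ('u vec \<Rightarrow> 'u vec \<Rightarrow> int \<Rightarrow> 'u vec) \<Rightarrow> ('h vec \<Rightarrow> 'u vec \<Rightarrow> int \<Rightarrow> 'u vec) \<Rightarrow> bool" where
  "module_algebra vacH YH \<Delta> \<epsilon> vacU YU YHU \<longleftrightarrow>
     nonlocal_va vacU YU \<and> nva_module vacH YH YHU \<and>
     (\<forall>h u. fin_laurent (YHU h u)) \<and>
     (\<forall>h. YHU h vacU = delta0 (sc (\<epsilon> h) vacU)) \<and>
     (\<forall>h u u' a b. YHU h (YU u u' b) a = modalg_rhs YU YHU \<Delta> h u u' a b)"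

definition comodule_algebra :: "'h vec \<Rightarrow> ('h vec \<Rightarrow> 'h vec \<Rightarrow> int \<Rightarrow> 'h vec)
     \<Rightarrow> ('h vec \<Rightarrow> ('h \<times> 'h) vec) \<Rightarrow> ('h vec \<Rightarrow> complex)
     \<Rightarrow> 'v vec \<Rightarrow> ('v vec \<Rightarrow> 'v vec \<Rightarrow> int \<Rightarrow> 'v vec) \<Rightarrow> ('v vec \<Rightarrow> ('h \<times> 'v) vec) \<Rightarrow> bool" where
  "comodule_algebra vacH YH \<Delta> \<epsilon> vacV YV \<rho> \<longleftrightarrow>
     nonlocal_va vacV YV \<and> lin \<rho> \<and>
     (\<forall>v. lmap (\<lambda>(a, b). tens (bas a) (\<rho> (bas b))) (\<rho> v)
          = rassoc (lmap (\<lambda>(a, b). tens (\<Delta> (bas a)) (bas b)) (\<rho> v))) \<and>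
     (\<forall>v. lmap (\<lambda>(a, b). sc (\<epsilon> (bas a)) (bas b)) (\<rho> v) = v) \<and>
     \<rho> vacV = tens vacH vacV \<and>
     (\<forall>v v' n. \<rho> (YV v v' n) = Ytens YH YV (\<rho> v) (\<rho> v') n)"

definition comp2 :: "('a vec \<Rightarrow> int \<Rightarrow> int \<Rightarrow> 'b vec) \<Rightarrow> (int \<Rightarrow> int \<Rightarrow> 'a vec) \<Rightarrow> int \<Rightarrow> int \<Rightarrow> 'b vec" where
  "comp2 L F i j = Sum_any (\<lambda>(p, q). L (F p q) (i - p) (j - q))"

text \<open>an operator series in x1 / in x2, and L(x1 + x2), L(x1 - x2) expanded in nonnegative powers of x2\<close>
definition in_x1 :: "('a vec \<Rightarrow> int \<Rightarrow> 'b vec) \<Rightarrow> 'a vec \<Rightarrow> int \<Rightarrow> int \<Rightarrow> 'b vec" where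
  "in_x1 L t i j = (if j = 0 then L t i else 0)"
definition in_x2 :: "('a vec \<Rightarrow> int \<Rightarrow> 'b vec) \<Rightarrow> 'a vec \<Rightarrow> int \<Rightarrow> int \<Rightarrow> 'b vec" where
  "in_x2 L t i j = (if i = 0 then L t j else 0)"
definition at_plus :: "('a vec \<Rightarrow> int \<Rightarrow> 'b vec) \<Rightarrow> 'a vec \<Rightarrow> int \<Rightarrow> int \<Rightarrow> 'b vec" where
  "at_plus L t i j = (if 0 \<le> j then sc (of_int (i + j) gchoose nat j) (L t (i + j)) else 0)"
definition at_minus :: "('a vec \<Rightarrow> int \<Rightarrow> 'b vec) \<Rightarrow> 'a vec \<Rightarrow> int \<Rightarrow> int \<Rightarrow> 'b vec" where
  "at_minus L t i j = (if 0 \<le> j then sc ((- 1) ^ nat j * (of_int (i + j) gchoose nat j)) (L t (i + j)) else 0)"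

definition ser_x1 :: "(int \<Rightarrow> 'b vec) \<Rightarrow> int \<Rightarrow> int \<Rightarrow> 'b vec" where
  "ser_x1 F i j = (if j = 0 then F i else 0)"

definition Ylin :: "('a vec \<Rightarrow> 'b vec \<Rightarrow> int \<Rightarrow> 'c vec) \<Rightarrow> ('a \<times> 'b) vec \<Rightarrow> int \<Rightarrow> 'c vec" where
  "Ylin Y t n = lmap (\<lambda>(a, b). Y (bas a) (bas b) n) t"

definition op12 :: "(('a \<times> 'b) vec \<Rightarrow> 'i \<Rightarrow> 'd vec) \<Rightarrow> ('a \<times> ('b \<times> 'c)) vec \<Rightarrow> 'i \<Rightarrow> ('d \<times> 'c) vec" where
  "op12 L t n = lmap (\<lambda>(a, b, c). tens (L (tens (bas a) (bas b)) n) (bas c)) t"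
definition op23 :: "(('b \<times> 'c) vec \<Rightarrow> 'i \<Rightarrow> 'd vec) \<Rightarrow> ('a \<times> ('b \<times> 'c)) vec \<Rightarrow> 'i \<Rightarrow> ('a \<times> 'd) vec" where
  "op23 L t n = lmap (\<lambda>(a, b, c). tens (bas a) (L (tens (bas b) (bas c)) n)) t"
definition op12r :: "(('a \<times> 'b) vec \<Rightarrow> 'i \<Rightarrow> ('d \<times> 'e) vec) \<Rightarrow> ('a \<times> ('b \<times> 'c)) vec \<Rightarrow> 'i \<Rightarrow> ('d \<times> ('e \<times> 'c)) vec" where
  "op12r L t n = rassoc (op12 L t n)"

definition twisting_operator :: "'u vec \<Rightarrow> ('u vec \<Rightarrow> 'u vec \<Rightarrow> int \<Rightarrow> 'u vec)
     \<Rightarrow> 'v vec \<Rightarrow> ('v vec \<Rightarrow> 'v vec \<Rightarrow> int \<Rightarrow> 'v vec)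
     \<Rightarrow> (('v \<times> 'u) vec \<Rightarrow> int \<Rightarrow> ('u \<times> 'v) vec) \<Rightarrow> bool" where
  "twisting_operator vacU YU vacV YV R \<longleftrightarrow>
     linS R \<and> (\<forall>t. fin_laurent (R t)) \<and>
     (\<forall>v. R (tens v vacU) = delta0 (tens vacU v)) \<and>
     (\<forall>u. R (tens vacV u) = delta0 (tens u vacV)) \<and>
     (\<forall>v u u' i j. R (tens v (YU u u' j)) i =
        comp2 (in_x2 (op12 (Ylin YU)))
          (comp2 (in_x1 (op23 R)) (at_plus (op12r R) (tens v (tens u u')))) i j) \<and>
     (\<forall>v v' u i j. R (tens (YV v v' j) u) i =
        comp2 (in_x2 (op23 (Ylin YV)))
          (comp2 (at_minus (op12r R)) (ser_x1 (op23 R (tens v (tens v' u))))) i j)"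

definition Rsmash :: "('h vec \<Rightarrow> 'u vec \<Rightarrow> int \<Rightarrow> 'u vec) \<Rightarrow> ('v vec \<Rightarrow> ('h \<times> 'v) vec)
     \<Rightarrow> ('v \<times> 'u) vec \<Rightarrow> int \<Rightarrow> ('u \<times> 'v) vec" where
  "Rsmash YHU \<rho> t n = lmap (\<lambda>(a, b). lmap (\<lambda>(c, d).
       sc ((- 1) powi n) (tens (YHU (bas c) (bas b) n) (bas d))) (\<rho> (bas a))) t"

text \<open>Y_sharp(u\<otimes>v,x)(u'\<otimes>v') = \<Sum>i Y(u,x)Y(h_i,x)u' \<otimes> Y(v_i,x)v'\<close>
definition Ysmash :: "('u vec \<Rightarrow> 'u vec \<Rightarrow> int \<Rightarrow> 'u vec) \<Rightarrow> ('v vec \<Rightarrow> 'v vec \<Rightarrow> int \<Rightarrow> 'v vec)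
     \<Rightarrow> ('h vec \<Rightarrow> 'u vec \<Rightarrow> int \<Rightarrow> 'u vec) \<Rightarrow> ('v vec \<Rightarrow> ('h \<times> 'v) vec)
     \<Rightarrow> ('u \<times> 'v) vec \<Rightarrow> ('u \<times> 'v) vec \<Rightarrow> int \<Rightarrow> ('u \<times> 'v) vec" where
  "Ysmash YU YV YHU \<rho> s t n = lmap2 (\<lambda>(a, b) (a', b'). lmap (\<lambda>(c, d).
       Sum_any (\<lambda>(m::int, q::int). tens (YU (bas a) (YHU (bas c) (bas a') q) (m - q))
                                          (YV (bas d) (bas b') (n - m)))) (\<rho> (bas b))) s t"

text \<open>Y_R(u\<otimes>v,x)(u'\<otimes>v') = \<Sum>j f_j(-x) Y(u,x)u'_j \<otimes> Y(v_j,x)v' where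
  R(x)(v\<otimes>u') = \<Sum>j u'_j \<otimes> v_j \<otimes> f_j(x); written via the coefficients T_k of R(x)(v\<otimes>u') = \<Sum>k T_k x^k
  as \<Sum>k (-x)^k (Y(u,x) \<otimes> Y(\<cdot>,x)v')(T_k).\<close>
definition Ytwisted :: "('u vec \<Rightarrow> 'u vec \<Rightarrow> int \<Rightarrow> 'u vec) \<Rightarrow> ('v vec \<Rightarrow> 'v vec \<Rightarrow> int \<Rightarrow> 'v vec)
     \<Rightarrow> (('v \<times> 'u) vec \<Rightarrow> int \<Rightarrow> ('u \<times> 'v) vec)
     \<Rightarrow> ('u \<times> 'v) vec \<Rightarrow> ('u \<times> 'v) vec \<Rightarrow> int \<Rightarrow> ('u \<times> 'v) vec" where
  "Ytwisted YU YV R s t n = lmap2 (\<lambda>(a, b) (a', b').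
       Sum_any (\<lambda>k::int. sc ((- 1) powi k)
         (lmap (\<lambda>(c, d). Sum_any (\<lambda>m::int. tens (YU (bas a) (bas c) m) (YV (bas d) (bas b') (n - k - m))))
            (R (tens (bas b) (bas a')) k)))) s t"

end

theory Submission
  imports Defs
begin

text \<open>Writing \<open>\<rho>(v) = \<Sum> h\<^sub>i \<otimes> v\<^sub>i\<close>, everything is expanded in bases and compared
  coefficientwise. The hexagon identity for \<open>Y(u, x\<^sub>2)u'\<close> in the second slot is the module-algebra
  law \<open>Y(h, x)Y(u, z)u' = \<Sum> Y(Y(h\<^sub>1, x - z)u, z)Y(h\<^sub>2, x)u'\<close> combined with the coassociativity of
  \<open>\<rho>\<close>. The one for \<open>Y(v, x\<^sub>2)v'\<close> in the first slot is the comodule-algebra law for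
  \<open>\<rho>(Y(v, x)v')\<close> combined with associativity \<open>Y(Y(h, x\<^sub>0)h', x\<^sub>2) = Y(h, x\<^sub>0 + x\<^sub>2)Y(h', x\<^sub>2)\<close>
  of the \<open>H\<close>-action on \<open>U\<close>. This action is only weakly associative, but since \<open>Y(h, x)u\<close> lies
  in \<open>U \<otimes> \<complex>((x))\<close>, \<open>Y(h, x\<^sub>1)Y(h', x\<^sub>2)u\<close> is truncated from below uniformly in \<open>x\<^sub>2\<close>; then
  \<open>(x\<^sub>0 + x\<^sub>2)\<^sup>l Y(h, x\<^sub>0 + x\<^sub>2)Y(h', x\<^sub>2)u\<close> has no negative powers of \<open>x\<^sub>0 + x\<^sub>2\<close>, so its
  expansions in \<open>x\<^sub>2\<close> and in \<open>x\<^sub>0\<close> agree and the factor \<open>(x\<^sub>0 + x\<^sub>2)\<^sup>l\<close> can be cancelled.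
  Finally \<open>Y\<^sub>\<sharp>\<close> and \<open>Y\<^sub>R\<close> agree after the change of summation variables
  \<open>(m, q) \<mapsto> (q, m - q)\<close>.\<close>

lemma lookup_sc [simp]: "Poly_Mapping.lookup (sc c v) a = c * Poly_Mapping.lookup v a"
  unfolding sc_def by transfer (simp add: when_def)

lemma lookup_bas: "Poly_Mapping.lookup (bas a) b = (if a = b then 1 else 0)"
  unfolding bas_def by (simp add: lookup_single when_def)

lemma sc_add_right: "sc c (a + b) = sc c a + sc c b"
  by (rule poly_mapping_eqI) (simp add: lookup_add algebra_simps)

lemma sc_add_left: "sc (c + d) a = sc c a + sc d a"
  by (rule poly_mapping_eqI) (simp add: lookup_add algebra_simps)

lemma sc_sc [simp]: "sc c (sc d a) = sc (c * d) a"
  by (rule poly_mapping_eqI) (simp add: algebra_simps)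

lemma sc_one [simp]: "sc 1 a = a"
  by (rule poly_mapping_eqI) simp

lemma sc_zero_left [simp]: "sc 0 a = 0"
  by (rule poly_mapping_eqI) simp

lemma sc_zero_right [simp]: "sc c 0 = 0"
  by (rule poly_mapping_eqI) simp

lemma sc_sum: "sc c (sum f A) = (\<Sum>x\<in>A. sc c (f x))"
  by (rule poly_mapping_eqI) (simp add: lookup_sum sum_distrib_left)

lemma sc_eq_zero_iff: "sc c v = 0 \<longleftrightarrow> c = 0 \<or> v = 0"
proof (cases "c = 0")
  case False
  then have "v = sc (inverse c) (sc c v)" by simp
  then have "sc c v = 0 \<Longrightarrow> v = 0" by (metis sc_zero_right)
  then show ?thesis by auto
qed simp

lemma lmap_expand_superset:
  assumes "finite S" "Poly_Mapping.keys t \<subseteq> S"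
  shows "lmap f t = (\<Sum>a\<in>S. sc (Poly_Mapping.lookup t a) (f a))"
  unfolding lmap_def
  by (rule sum.mono_neutral_left) (use assms in \<open>auto simp: in_keys_iff\<close>)

lemma lmap_add: "lmap f (a + b) = lmap f a + lmap f b"
proof -
  let ?S = "Poly_Mapping.keys a \<union> Poly_Mapping.keys b"
  have "Poly_Mapping.keys (a + b) \<subseteq> ?S" by (rule keys_add)
  then show ?thesis
    by (simp add: lmap_expand_superset[of ?S] lookup_add sc_add_left sum.distrib)
qed

lemma lmap_sc: "lmap f (sc c a) = sc c (lmap f a)"
proof -
  have "Poly_Mapping.keys (sc c a) \<subseteq> Poly_Mapping.keys a" by (auto simp: in_keys_iff)
  then show ?thesis
    by (simp add: lmap_expand_superset[of "Poly_Mapping.keys a"] sc_sum)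
qed

lemma lmap_zero [simp]: "lmap f 0 = 0"
  by (simp add: lmap_def)

lemma lmap_bas [simp]: "lmap f (bas a) = f a"
  by (simp add: lmap_def bas_def)

lemma lmap_fun_add: "lmap (\<lambda>x. f x + g x) t = lmap f t + lmap g t"
  by (simp add: lmap_def sc_add_right sum.distrib)

lemma lmap_fun_sc: "lmap (\<lambda>x. sc c (f x)) t = sc c (lmap f t)"
  by (simp add: lmap_def sc_sum mult.commute)

lemma lmap_fun_zero [simp]: "lmap (\<lambda>x. 0) t = 0"
  by (simp add: lmap_def)

lemma lmap_fun_sum: "lmap (\<lambda>x. \<Sum>i\<in>A. f i x) t = (\<Sum>i\<in>A. lmap (f i) t)"
  by (induction A rule: infinite_finite_induct) (auto simp: lmap_fun_add)

lemma lmap_cong: "(\<And>x. x \<in> Poly_Mapping.keys t \<Longrightarrow> f x = g x) \<Longrightarrow> lmap f t = lmap g t"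
  by (simp add: lmap_def)

lemma lmap_pair_cong: "(\<And>a b. f (a, b) = g (a, b)) \<Longrightarrow> lmap f t = lmap g t"
  by (metis surj_pair)

lemma lmap_swap: "lmap (\<lambda>x. lmap (\<lambda>y. f x y) s) t = lmap (\<lambda>y. lmap (\<lambda>x. f x y) t) s"
  by (simp add: lmap_def sc_sum sum.swap[of _ "Poly_Mapping.keys t"] mult.commute)

lemma lmap_bas_id [simp]: "lmap bas t = t"
proof (rule poly_mapping_eqI)
  fix k
  have "Poly_Mapping.lookup (lmap bas t) k
      = (\<Sum>a\<in>Poly_Mapping.keys t. Poly_Mapping.lookup t a * (if a = k then 1 else 0))"
    by (simp add: lmap_def lookup_sum lookup_bas)
  also have "\<dots> = Poly_Mapping.lookup t k"
    by (simp add: if_distrib[of "\<lambda>x. _ * x"] sum.delta' in_keys_iff cong: if_cong)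
  finally show "Poly_Mapping.lookup (lmap bas t) k = Poly_Mapping.lookup t k" .
qed

lemma lin_lmap [simp]: "lin (lmap f)"
  by (simp add: lin_def lmap_add lmap_sc)

lemma lin_add: "lin \<phi> \<Longrightarrow> \<phi> (a + b) = \<phi> a + \<phi> b"
  unfolding lin_def by blast

lemma lin_scale: "lin \<phi> \<Longrightarrow> \<phi> (sc c a) = sc c (\<phi> a)"
  unfolding lin_def by blast

lemma lin_zero: "lin \<phi> \<Longrightarrow> \<phi> 0 = 0"
  using lin_scale[of \<phi> 0 0] by simp

lemma lin_sum: "lin \<phi> \<Longrightarrow> \<phi> (sum f A) = (\<Sum>x\<in>A. \<phi> (f x))"
  by (induction A rule: infinite_finite_induct) (auto simp: lin_zero lin_add)

lemma lin_lmap_comm: "lin \<phi> \<Longrightarrow> \<phi> (lmap g t) = lmap (\<lambda>x. \<phi> (g x)) t"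
  by (simp add: lmap_def lin_sum lin_scale)

lemma lmap_lmap: "lmap f (lmap g t) = lmap (\<lambda>x. lmap f (g x)) t"
  by (rule lin_lmap_comm) simp

lemma lin_lmap_bas: "lin \<phi> \<Longrightarrow> lmap (\<lambda>x. \<phi> (bas x)) t = \<phi> t"
  using lin_lmap_comm[of \<phi> bas t] by simp

lemma lin_id [simp]: "lin (\<lambda>x. x)"
  by (simp add: lin_def)

lemma lin_const_zero [simp]: "lin (\<lambda>x. 0)"
  by (simp add: lin_def)

lemma lin_comp: "lin f \<Longrightarrow> lin g \<Longrightarrow> lin (\<lambda>x. f (g x))"
  by (simp add: lin_def)

lemma lin_scI: "lin f \<Longrightarrow> lin (\<lambda>x. sc c (f x))"
  by (simp add: lin_def sc_add_right mult.commute)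

lemma lin_plusI: "lin f \<Longrightarrow> lin g \<Longrightarrow> lin (\<lambda>x. f x + g x)"
  by (simp add: lin_def sc_add_right algebra_simps)

lemma lin_sumI: "(\<And>i. i \<in> A \<Longrightarrow> lin (f i)) \<Longrightarrow> lin (\<lambda>x. \<Sum>i\<in>A. f i x)"
  by (induction A rule: infinite_finite_induct) (auto intro: lin_plusI)

lemma lin_lmap_argI: "(\<And>y. lin (g y)) \<Longrightarrow> lin (\<lambda>x. lmap (\<lambda>y. g y x) t)"
  unfolding lmap_def by (rule lin_sumI) (simp add: lin_scI)

lemma bilin_left: "bilin Y \<Longrightarrow> lin (\<lambda>u. Y u v n)"
  by (simp add: bilin_def linS_def)

lemma bilin_right: "bilin Y \<Longrightarrow> lin (\<lambda>v. Y u v n)"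
  by (simp add: bilin_def linS_def)

lemma tens_eq_lmap: "tens u v = lmap (\<lambda>a. lmap (\<lambda>b. bas (a, b)) v) u"
  by (simp only: tens_def lmap_def sc_sum sc_sc)

lemma tens_bas_bas [simp]: "tens (bas a) (bas b) = bas (a, b)"
  by (simp add: tens_eq_lmap)

lemma lmap_tens: "lmap f (tens u v) = lmap (\<lambda>a. lmap (\<lambda>b. f (a, b)) v) u"
  by (simp add: tens_eq_lmap lmap_lmap)

lemma lin_tens_left: "lin (\<lambda>u. tens u v)"
  by (simp add: tens_eq_lmap)

lemma lin_tens_right: "lin (\<lambda>v. tens u v)"
  by (simp add: tens_eq_lmap lin_def lmap_add lmap_sc lmap_fun_add lmap_fun_sc)

lemma lin_tens_leftI: "lin f \<Longrightarrow> lin (\<lambda>x. tens (f x) w)"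
  by (rule lin_comp[OF lin_tens_left])

lemma tens_sc_left: "tens (sc c a) v = sc c (tens a v)"
  by (rule lin_scale[OF lin_tens_left])

lemma tens_sc_right: "tens u (sc c a) = sc c (tens u a)"
  by (rule lin_scale[OF lin_tens_right])

lemma tens_zero_left [simp]: "tens 0 v = 0"
  by (rule lin_zero[OF lin_tens_left])

lemma tens_zero_right [simp]: "tens u 0 = 0"
  by (rule lin_zero[OF lin_tens_right])

lemma tens_lmap_left: "tens (lmap g t) v = lmap (\<lambda>x. tens (g x) v) t"
  by (rule lin_lmap_comm[OF lin_tens_left])

lemma tens_lmap_right: "tens u (lmap g t) = lmap (\<lambda>x. tens u (g x)) t"
  by (rule lin_lmap_comm[OF lin_tens_right])

lemma lin_rassoc: "lin rassoc"
  by (simp add: rassoc_def lin_def lmap_add lmap_sc)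

lemma rassoc_tens: "rassoc (tens (tens A B) C) = tens A (tens B C)"
  by (simp add: rassoc_def lmap_tens tens_eq_lmap[of A] lmap_lmap)

lemma lin_op12: "lin (\<lambda>t. op12 L t n)"
  unfolding op12_def by simp

lemma lin_op23: "lin (\<lambda>t. op23 L t n)"
  unfolding op23_def by simp

lemma lin_op12r: "lin (\<lambda>t. op12r L t n)"
  unfolding op12r_def op12_def by (rule lin_comp[OF lin_rassoc]) simp

lemma lin_Ylin: "lin (\<lambda>t. Ylin Y t n)"
  unfolding Ylin_def by simp

lemma op23_tens:
  assumes "lin (\<lambda>w. L w n)"
  shows "op23 L (tens X W) n = tens X (L W n)"
proof -
  have "op23 L (tens X W) n = lmap (\<lambda>a. lmap (\<lambda>bc. tens (bas a) (L (bas bc) n)) W) X"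
    unfolding op23_def lmap_tens by (simp add: split_def)
  also have "\<dots> = tens X (L W n)"
    by (simp add: tens_lmap_right[symmetric] tens_lmap_left[symmetric] lin_lmap_bas[OF assms])
  finally show ?thesis .
qed

lemma op12_tens:
  assumes "lin (\<lambda>w. L w n)"
  shows "op12 L (tens X (tens Y Z)) n = tens (L (tens X Y) n) Z"
proof -
  have lin_right: "lin (\<lambda>b. tens (L (tens (bas a) b) n) Z)" for a
    by (intro lin_tens_leftI lin_comp[OF assms] lin_tens_right)
  have lin_left: "lin (\<lambda>x. tens (L (tens x Y) n) Z)"
    by (intro lin_tens_leftI lin_comp[OF assms] lin_tens_left)
  have "op12 L (tens X (tens Y Z)) n
      = lmap (\<lambda>a. lmap (\<lambda>b. tens (L (tens (bas a) (bas b)) n) Z) Y) X"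
    unfolding op12_def lmap_tens
    by (simp del: tens_bas_bas add: split_def tens_lmap_right[symmetric])
  also have "\<dots> = tens (L (tens X Y) n) Z"
    by (simp del: tens_bas_bas add: lin_lmap_bas[OF lin_right] lin_lmap_bas[OF lin_left])
  finally show ?thesis .
qed

lemma Ylin_tens:
  assumes "bilin Y"
  shows "Ylin Y (tens X Z) n = Y X Z n"
proof -
  have "Ylin Y (tens X Z) n = lmap (\<lambda>a. lmap (\<lambda>b. Y (bas a) (bas b) n) Z) X"
    unfolding Ylin_def lmap_tens by simp
  also have "\<dots> = Y X Z n"
    by (simp add: lin_lmap_bas[OF bilin_right[OF assms]] lin_lmap_bas[OF bilin_left[OF assms]])
  finally show ?thesis .
qed

lemma lin_Sum_any:
  assumes "lin \<phi>" "finite {k. f k \<noteq> 0}"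
  shows "\<phi> (Sum_any f) = Sum_any (\<lambda>k. \<phi> (f k))"
proof -
  have "{k. \<phi> (f k) \<noteq> 0} \<subseteq> {k. f k \<noteq> 0}"
    using lin_zero[OF assms(1)] by auto
  then show ?thesis
    using assms by (simp add: Sum_any.expand_superset[of "{k. f k \<noteq> 0}"] lin_sum)
qed

lemma lmap_Sum_any:
  assumes "\<And>x. x \<in> Poly_Mapping.keys t \<Longrightarrow> finite {k. g k x \<noteq> 0}"
  shows "lmap (\<lambda>x. Sum_any (\<lambda>k. g k x)) t = Sum_any (\<lambda>k. lmap (g k) t)"
proof -
  define S where "S = (\<Union>x\<in>Poly_Mapping.keys t. {k. g k x \<noteq> 0})"
  have S: "finite S" using assms by (simp add: S_def)
  have "Sum_any (\<lambda>k. g k x) = (\<Sum>k\<in>S. g k x)" if "x \<in> Poly_Mapping.keys t" for x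
    by (rule Sum_any.expand_superset[OF S]) (use that in \<open>auto simp: S_def\<close>)
  then have "lmap (\<lambda>x. Sum_any (\<lambda>k. g k x)) t = lmap (\<lambda>x. \<Sum>k\<in>S. g k x) t"
    by (rule lmap_cong)
  also have "\<dots> = (\<Sum>k\<in>S. lmap (g k) t)" by (rule lmap_fun_sum)
  also have "\<dots> = Sum_any (\<lambda>k. lmap (g k) t)"
  proof (rule Sum_any.expand_superset[OF S, symmetric])
    show "{k. lmap (g k) t \<noteq> 0} \<subseteq> S"
    proof
      fix k assume "k \<in> {k. lmap (g k) t \<noteq> 0}"
      then obtain x where "x \<in> Poly_Mapping.keys t" "g k x \<noteq> 0"
        using lmap_cong[of t "g k" "\<lambda>_. 0"] by auto
      then show "k \<in> S" by (auto simp: S_def)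
    qed
  qed
  finally show ?thesis .
qed

lemma finite_support_lmap:
  assumes "\<And>y. y \<in> Poly_Mapping.keys t \<Longrightarrow> finite {p. g y p \<noteq> 0}"
  shows "finite {p. lmap (\<lambda>y. g y p) t \<noteq> 0}"
proof (rule finite_subset)
  show "{p. lmap (\<lambda>y. g y p) t \<noteq> 0} \<subseteq> (\<Union>y\<in>Poly_Mapping.keys t. {p. g y p \<noteq> 0})"
  proof
    fix p assume "p \<in> {p. lmap (\<lambda>y. g y p) t \<noteq> 0}"
    then obtain y where "y \<in> Poly_Mapping.keys t" "g y p \<noteq> 0"
      using lmap_cong[of t "\<lambda>y. g y p" "\<lambda>_. 0"] by auto
    then show "p \<in> (\<Union>y\<in>Poly_Mapping.keys t. {p. g y p \<noteq> 0})" by blast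
  qed
qed (use assms in auto)

lemma lmap_split_Sum_any:
  assumes "\<And>a b. finite {k. g a b k \<noteq> 0}"
  shows "lmap (\<lambda>(a, b). Sum_any (g a b)) t = Sum_any (\<lambda>k. lmap (\<lambda>(a, b). g a b k) t)"
proof -
  have "lmap (\<lambda>(a, b). Sum_any (g a b)) t = lmap (\<lambda>x. Sum_any (\<lambda>k. (\<lambda>(a, b). g a b k) x)) t"
    by (rule lmap_pair_cong) simp
  also have "\<dots> = Sum_any (\<lambda>k. lmap (\<lambda>(a, b). g a b k) t)"
    by (rule lmap_Sum_any) (auto simp: assms split: prod.split)
  finally show ?thesis .
qed

lemma Sum_any_lmap_lmap:
  assumes "\<And>a b c d. finite {p. g a b c d p \<noteq> 0}"
  shows "Sum_any (\<lambda>p. lmap (\<lambda>(a, b). lmap (\<lambda>(c, d). g a b c d p) (f a b)) t)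
       = lmap (\<lambda>(a, b). lmap (\<lambda>(c, d). Sum_any (g a b c d)) (f a b)) t"
proof -
  have "finite {p. lmap (\<lambda>(c, d). g a b c d p) s \<noteq> 0}" for a b s
    using finite_support_lmap[of s "\<lambda>(c, d) p. g a b c d p"] assms by (simp add: split_def)
  then have "Sum_any (\<lambda>p. lmap (\<lambda>(a, b). lmap (\<lambda>(c, d). g a b c d p) (f a b)) t)
      = lmap (\<lambda>(a, b). Sum_any (\<lambda>p. lmap (\<lambda>(c, d). g a b c d p) (f a b))) t"
    by (rule lmap_split_Sum_any[symmetric])
  also have "\<dots> = lmap (\<lambda>(a, b). lmap (\<lambda>(c, d). Sum_any (g a b c d)) (f a b)) t"
    by (rule lmap_pair_cong) (simp add: lmap_split_Sum_any assms)
  finally show ?thesis .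
qed

lemma Sum_any_bij_reindex: "bij l \<Longrightarrow> Sum_any (\<lambda>x. g (l x)) = Sum_any g"
  using Sum_any.reindex_cong[of l g "\<lambda>x. g (l x)"] by (simp add: comp_def)

lemma Sum_any_inj_reindex:
  assumes "inj h" "\<And>x. f x \<noteq> 0 \<Longrightarrow> x \<in> range h"
  shows "Sum_any (\<lambda>y. f (h y)) = Sum_any f"
proof -
  have supp: "{x. f x \<noteq> 0} = h ` {y. f (h y) \<noteq> 0}" using assms(2) by auto
  have inj: "inj_on h {y. f (h y) \<noteq> 0}" using assms(1) by (simp add: inj_on_def inj_def)
  show ?thesis
  proof (cases "finite {y. f (h y) \<noteq> 0}")
    case True
    then show ?thesis
      by (simp add: Sum_any.expand_set supp sum.reindex[OF inj])
  next
    case False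
    then have "infinite {x. f x \<noteq> 0}"
      unfolding supp using finite_imageD[OF _ inj] by blast
    with False show ?thesis by simp
  qed
qed

lemma comp2_in_x1: "comp2 (in_x1 L) F i j = Sum_any (\<lambda>p. L (F p j) (i - p))"
proof -
  have "comp2 (in_x1 L) F i j = Sum_any (\<lambda>(p, q). if j - q = 0 then L (F p q) (i - p) else 0)"
    unfolding comp2_def in_x1_def by (rule Sum_any.cong) auto
  also have "\<dots> = Sum_any (\<lambda>p. (\<lambda>(p, q). if j - q = 0 then L (F p q) (i - p) else 0) (p, j))"
    by (rule Sum_any_inj_reindex[symmetric]) (auto simp: inj_def split: if_splits)
  finally show ?thesis by simp
qed

lemma comp2_in_x2: "comp2 (in_x2 L) F i j = Sum_any (\<lambda>q. L (F i q) (j - q))"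
proof -
  have "comp2 (in_x2 L) F i j = Sum_any (\<lambda>(p, q). if i - p = 0 then L (F p q) (j - q) else 0)"
    unfolding comp2_def in_x2_def by (rule Sum_any.cong) auto
  also have "\<dots> = Sum_any (\<lambda>q. (\<lambda>(p, q). if i - p = 0 then L (F p q) (j - q) else 0) (i, q))"
    by (rule Sum_any_inj_reindex[symmetric]) (auto simp: inj_def split: if_splits)
  finally show ?thesis by simp
qed

lemma comp2_ser_x1:
  assumes "\<And>x y. L 0 x y = 0"
  shows "comp2 L (ser_x1 S) i q = Sum_any (\<lambda>p. L (S p) (i - p) q)"
proof -
  have "comp2 L (ser_x1 S) i q = Sum_any (\<lambda>(p, r::int). if r = 0 then L (S p) (i - p) q else 0)"
    unfolding comp2_def ser_x1_def by (rule Sum_any.cong) (auto simp: assms)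
  also have "\<dots> = Sum_any (\<lambda>p. (\<lambda>(p, r::int). if r = 0 then L (S p) (i - p) q else 0) (p, 0))"
    by (rule Sum_any_inj_reindex[symmetric]) (auto simp: inj_def split: if_splits)
  finally show ?thesis by simp
qed

lemma Sum_any_Sum_any:
  assumes "finite {(a, b). g a b \<noteq> 0}"
  shows "Sum_any (\<lambda>a. Sum_any (g a)) = Sum_any (\<lambda>(a, b). g a b)"
proof (rule Sum_any.cartesian_product)
  show "finite (fst ` {(a, b). g a b \<noteq> 0} \<times> snd ` {(a, b). g a b \<noteq> 0})"
    using assms by simp
qed force

lemma finite_support_Sum_any:
  assumes "finite {(a, b). g a b \<noteq> 0}"
  shows "finite {a. Sum_any (g a) \<noteq> 0}"
proof (rule finite_subset)
  show "{a. Sum_any (g a) \<noteq> 0} \<subseteq> fst ` {(a, b). g a b \<noteq> 0}"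
  proof
    fix a assume "a \<in> {a. Sum_any (g a) \<noteq> 0}"
    then obtain b where "g a b \<noteq> 0"
      by (auto elim: Sum_any.not_neutral_obtains_not_neutral)
    then show "a \<in> fst ` {(a, b). g a b \<noteq> 0}" by (force intro: rev_image_eqI[of "(a, b)"])
  qed
qed (use assms in simp)

lemma finite_support_box:
  fixes g :: "int \<Rightarrow> int \<Rightarrow> 'a::zero"
  assumes "\<And>p q. g p q \<noteq> 0 \<Longrightarrow> a \<le> p \<and> p \<le> b \<and> c \<le> q \<and> q \<le> d"
  shows "finite {(p, q). g p q \<noteq> 0}"
  by (rule finite_subset[of _ "{a..b} \<times> {c..d}"]) (use assms in auto)

lemma laurentE:
  assumes "laurent F"
  obtains N where "\<And>n. n < N \<Longrightarrow> F n = 0"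
  using assms that unfolding laurent_def by auto

lemma finite_support_tens_conv:
  assumes "laurent A" "laurent B"
  shows "finite {m. tens (A m) (B (c - m)) \<noteq> 0}"
proof -
  obtain N1 where N1: "\<And>n. n < N1 \<Longrightarrow> A n = 0" using laurentE[OF assms(1)] by blast
  obtain N2 where N2: "\<And>n. n < N2 \<Longrightarrow> B n = 0" using laurentE[OF assms(2)] by blast
  have "m \<in> {N1..c - N2}" if "tens (A m) (B (c - m)) \<noteq> 0" for m
  proof -
    have "A m \<noteq> 0" "B (c - m) \<noteq> 0" using that by auto
    then have "\<not> m < N1" "\<not> c - m < N2" using N1 N2 by auto
    then show ?thesis by simp
  qed
  then show ?thesis by (auto intro: finite_subset[of _ "{N1..c - N2}"])
qed

lemma fin_laurent_zero: "fin_laurent (\<lambda>n. 0)"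
  unfolding fin_laurent_def by (rule exI[of _ "[]"], rule exI[of _ "[]"]) simp

lemma fin_laurent_add_term:
  assumes "fin_laurent F" "laurent f"
  shows "fin_laurent (\<lambda>n. F n + sc (f n) w)"
proof -
  obtain ws fs where A: "length fs = length ws" "\<forall>f\<in>set fs. laurent f"
    "\<forall>n. F n = (\<Sum>i<length ws. sc ((fs ! i) n) (ws ! i))"
    using assms unfolding fin_laurent_def by blast
  have "F n + sc (f n) w = (\<Sum>i<length (ws @ [w]). sc (((fs @ [f]) ! i) n) ((ws @ [w]) ! i))" for n
    using A(1) by (simp add: A(3) nth_append)
  then show ?thesis unfolding fin_laurent_def using A assms(2)
    by (intro exI[of _ "ws @ [w]"] exI[of _ "fs @ [f]"]) auto
qed

lemma fin_laurent_add:
  assumes "fin_laurent F" "fin_laurent G"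
  shows "fin_laurent (\<lambda>n. F n + G n)"
proof -
  obtain ws fs where A: "length fs = length ws" "\<forall>f\<in>set fs. laurent f"
    "\<forall>n. G n = (\<Sum>i<length ws. sc ((fs ! i) n) (ws ! i))"
    using assms(2) unfolding fin_laurent_def by blast
  have "k \<le> length ws \<Longrightarrow> fin_laurent (\<lambda>n. F n + (\<Sum>i<k. sc ((fs ! i) n) (ws ! i)))" for k
  proof (induction k)
    case 0
    then show ?case using assms(1) by simp
  next
    case (Suc k)
    have "laurent (fs ! k)" using A(1,2) Suc.prems by auto
    from fin_laurent_add_term[OF Suc.IH this, of "ws ! k"] Suc.prems
    show ?case by (simp add: add.assoc)
  qed
  from this[of "length ws"] show ?thesis by (simp add: A(3))
qed

lemma fin_laurent_lin:
  assumes "fin_laurent F" "lin \<phi>"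
  shows "fin_laurent (\<lambda>n. \<phi> (F n))"
proof -
  obtain ws fs where A: "length fs = length ws" "\<forall>f\<in>set fs. laurent f"
    "\<forall>n. F n = (\<Sum>i<length ws. sc ((fs ! i) n) (ws ! i))"
    using assms unfolding fin_laurent_def by blast
  have "\<phi> (F n) = (\<Sum>i<length (map \<phi> ws). sc ((fs ! i) n) ((map \<phi> ws) ! i))" for n
    by (simp add: A(3) lin_sum[OF assms(2)] lin_scale[OF assms(2)])
  then show ?thesis unfolding fin_laurent_def using A
    by (intro exI[of _ "map \<phi> ws"] exI[of _ fs]) auto
qed

lemma fin_laurent_sc:
  assumes "fin_laurent F"
  shows "fin_laurent (\<lambda>n. sc (g n) (F n))"
proof -
  obtain ws fs where A: "length fs = length ws" "\<forall>f\<in>set fs. laurent f"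
    "\<forall>n. F n = (\<Sum>i<length ws. sc ((fs ! i) n) (ws ! i))"
    using assms unfolding fin_laurent_def by blast
  define gfs where "gfs = map (\<lambda>f n. g n * f n) fs"
  have "sc (g n) (F n) = (\<Sum>i<length ws. sc ((gfs ! i) n) (ws ! i))" for n
    using A(1) by (simp add: A(3) sc_sum gfs_def)
  moreover have "\<forall>f\<in>set gfs. laurent f"
    using A(2) unfolding laurent_def gfs_def by fastforce
  ultimately show ?thesis unfolding fin_laurent_def using A(1)
    by (intro exI[of _ ws] exI[of _ gfs]) (auto simp: gfs_def)
qed

lemma fin_laurent_sum:
  assumes "\<And>x. x \<in> A \<Longrightarrow> fin_laurent (F x)"
  shows "fin_laurent (\<lambda>n. \<Sum>x\<in>A. F x n)"
  using assms
proof (induction A rule: infinite_finite_induct)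
  case (insert x A)
  then show ?case by (simp add: fin_laurent_add)
qed (simp_all add: fin_laurent_zero)

lemma fin_laurent_lmap:
  assumes "\<And>x. fin_laurent (F x)"
  shows "fin_laurent (\<lambda>n. lmap (\<lambda>x. F x n) t)"
  unfolding lmap_def by (rule fin_laurent_sum) (rule fin_laurent_lin[OF assms lin_scI[OF lin_id]])

lemma fin_laurent_uniform_truncation:
  fixes G :: "'a vec \<Rightarrow> 'k \<Rightarrow> int \<Rightarrow> 'c vec"
  assumes "fin_laurent F" "\<And>k m. lin (\<lambda>x. G x k m)" "\<And>w. \<exists>N. \<forall>k m. m < N \<longrightarrow> G w k m = 0"
  obtains N where "\<And>n k m. m < N \<Longrightarrow> G (F n) k m = 0"
proof -
  obtain ws fs where A: "length fs = length ws"
    "\<forall>n. F n = (\<Sum>i<length ws. sc ((fs ! i) n) (ws ! i))"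
    using assms unfolding fin_laurent_def by blast
  have "\<forall>i. \<exists>N. \<forall>k m. m < N \<longrightarrow> G (ws ! i) k m = 0"
    using assms(3) by blast
  then obtain Nf where Nf: "\<forall>i. \<forall>k m. m < Nf i \<longrightarrow> G (ws ! i) k m = 0"
    by (rule choice[THEN exE])
  define N where "N = Min (insert 0 (Nf ` {..<length ws}))"
  have "G (F n) k m = 0" if "m < N" for n k m
  proof -
    have "N \<le> Nf i" if "i < length ws" for i
      unfolding N_def using that by (intro Min_le) auto
    then have "G (ws ! i) k m = 0" if "i < length ws" for i
      using Nf \<open>m < N\<close> that by fastforce
    then show ?thesis
      by (simp add: A(2) lin_sum[OF assms(2)] lin_scale[OF assms(2)])
  qed
  then show ?thesis using that by blast
qed

section \<open>Weak associativity with uniform truncation implies associativity\<close>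

lemma gbinomial_int_eq_choose:
  "0 \<le> a \<Longrightarrow> (of_int a gchoose s :: complex) = of_nat (nat a choose s)"
  by (metis binomial_gbinomial of_int_of_nat_eq int_nat_eq)

lemma gbinomial_int_eq_0: "0 \<le> a \<Longrightarrow> a < int s \<Longrightarrow> (of_int a gchoose s :: complex) = 0"
  by (simp add: gbinomial_int_eq_choose)

lemma gbinomial_int_symmetric:
  assumes "0 \<le> q" "0 \<le> t"
  shows "(of_int (q + t) gchoose nat q :: complex) = of_int (q + t) gchoose nat t"
proof -
  have "nat (q + t) choose nat q = nat (q + t) choose nat t"
    using binomial_symmetric[of "nat q" "nat (q + t)"] assms by (simp add: nat_add_distrib)
  moreover have "(of_int (q + t) gchoose nat q :: complex) = of_nat (nat (q + t) choose nat q)"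
    by (rule gbinomial_int_eq_choose) (use assms in simp)
  moreover have "(of_int (q + t) gchoose nat t :: complex) = of_nat (nat (q + t) choose nat t)"
    by (rule gbinomial_int_eq_choose) (use assms in simp)
  ultimately show ?thesis by simp
qed

lemma gbinomial_minus_one_neq_0: "((- 1 :: complex) gchoose s) \<noteq> 0"
proof -
  have "(of_nat s gchoose s :: complex) = 1" using binomial_gbinomial[of s s] by simp
  then show ?thesis using gbinomial_minus[of "1::complex" s] by simp
qed

lemma gbinomial_int_pascal:
  assumes "1 \<le> s"
  shows "(of_int (a + s) gchoose nat s :: complex)
       = (of_int (a + s - 1) gchoose nat (s - 1)) + (of_int (a + s - 1) gchoose nat s)"
proof -
  have s: "nat s = Suc (nat (s - 1))" using assms by simp
  have "(of_int (a + s) :: complex) = of_int (a + s - 1) + 1" by simp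
  then show ?thesis
    using gbinomial_Suc_Suc[of "of_int (a + s - 1) :: complex" "nat (s - 1)"] s by simp
qed

text \<open>Double series \<open>E i j\<close> are coefficients of \<open>x\<^sub>0\<^sup>i x\<^sub>2\<^sup>j\<close>; \<open>shift_x0 k\<close> multiplies by
  \<open>x\<^sub>0\<^sup>k\<close>.\<close>

definition times_x0_plus_x2 :: "(int \<Rightarrow> int \<Rightarrow> 'b vec) \<Rightarrow> int \<Rightarrow> int \<Rightarrow> 'b vec" where
  "times_x0_plus_x2 E i j = E i (j - 1) + E (i - 1) j"

definition shift_x0 :: "nat \<Rightarrow> (int \<Rightarrow> int \<Rightarrow> 'b vec) \<Rightarrow> int \<Rightarrow> int \<Rightarrow> 'b vec" where
  "shift_x0 k G n m = G (n - int k) m"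

definition truncated2 :: "(int \<Rightarrow> int \<Rightarrow> 'b vec) \<Rightarrow> int \<Rightarrow> int \<Rightarrow> bool" where
  "truncated2 G M N \<longleftrightarrow> (\<forall>n m. n < M \<or> m < N \<longrightarrow> G n m = 0)"

text \<open>For a double series \<open>G(x\<^sub>1, x\<^sub>2)\<close>, \<open>expand_x2 G\<close> and \<open>expand_x0 G\<close> are \<open>G(x\<^sub>0 + x\<^sub>2, x\<^sub>2)\<close>
  expanded in nonnegative powers of \<open>x\<^sub>2\<close> and of \<open>x\<^sub>0\<close>, respectively.\<close>

definition expand_x2 :: "(int \<Rightarrow> int \<Rightarrow> 'b vec) \<Rightarrow> int \<Rightarrow> int \<Rightarrow> 'b vec" where
  "expand_x2 G q j =
     Sum_any (\<lambda>s. if 0 \<le> s then sc (of_int (q + s) gchoose nat s) (G (q + s) (j - s)) else 0)"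

definition expand_x0 :: "(int \<Rightarrow> int \<Rightarrow> 'b vec) \<Rightarrow> int \<Rightarrow> int \<Rightarrow> 'b vec" where
  "expand_x0 G q j =
     (if 0 \<le> q then Sum_any (\<lambda>t. sc (of_int (q + t) gchoose nat q) (G (q + t) (j - t))) else 0)"

lemma mulpow_0 [simp]: "mulpow 0 E = E"
  by (simp add: mulpow_def fun_eq_iff)

lemma mulpow_Suc: "mulpow (Suc k) E = times_x0_plus_x2 (mulpow k E)"
proof (intro ext)
  fix i j
  define X where "X l = E (i - int l) (j - int (Suc k - l))" for l
  have pascal: "of_nat (Suc k choose Suc l) = (of_nat (k choose l) + of_nat (k choose Suc l) :: complex)"
    for l by simp
  have "mulpow (Suc k) E i j = (\<Sum>l\<le>Suc k. sc (of_nat (Suc k choose l)) (X l))"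
    by (simp add: mulpow_def X_def)
  also have "\<dots> = X 0 + (\<Sum>l\<le>k. sc (of_nat (Suc k choose Suc l)) (X (Suc l)))"
    by (simp only: sum.atMost_Suc_shift binomial_n_0 of_nat_1 sc_one)
  also have "\<dots> = X 0 + (\<Sum>l\<le>k. sc (of_nat (k choose Suc l)) (X (Suc l)))
                    + (\<Sum>l\<le>k. sc (of_nat (k choose l)) (X (Suc l)))"
    by (simp only: pascal sc_add_left sum.distrib add_ac)
  also have "X 0 + (\<Sum>l\<le>k. sc (of_nat (k choose Suc l)) (X (Suc l))) = mulpow k E i (j - 1)"
  proof -
    have "mulpow k E i (j - 1) = (\<Sum>l\<le>k. sc (of_nat (k choose l)) (X l))"
      unfolding mulpow_def X_def by (rule sum.cong) (auto simp: Suc_diff_le algebra_simps)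
    also have "\<dots> = X 0 + (\<Sum>l<k. sc (of_nat (k choose Suc l)) (X (Suc l)))"
      by (cases k) (simp_all only: sum.atMost_Suc_shift lessThan_Suc_atMost binomial_n_0 of_nat_1 sc_one,
          simp)
    also have "\<dots> = X 0 + (\<Sum>l\<le>k. sc (of_nat (k choose Suc l)) (X (Suc l)))"
      by (simp add: lessThan_Suc_atMost[symmetric] binomial_eq_0)
    finally show ?thesis by simp
  qed
  also have "(\<Sum>l\<le>k. sc (of_nat (k choose l)) (X (Suc l))) = mulpow k E (i - 1) j"
    unfolding mulpow_def X_def by (rule sum.cong) (auto simp: algebra_simps)
  finally show "mulpow (Suc k) E i j = times_x0_plus_x2 (mulpow k E) i j"
    by (simp add: times_x0_plus_x2_def add_ac)
qed

lemma mulpow_truncated: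
  assumes "\<And>q j. q < N \<Longrightarrow> E q j = 0" "q < N"
  shows "mulpow k E q j = 0"
  unfolding mulpow_def using assms by (auto intro!: sum.neutral)

lemma times_x0_plus_x2_cancel:
  assumes "times_x0_plus_x2 X = times_x0_plus_x2 Y"
    and "\<And>q j. q < N \<Longrightarrow> X q j = 0" "\<And>q j. q < N \<Longrightarrow> Y q j = 0"
  shows "X = Y"
proof -
  have shifted: "X (N + int d) j = Y (N + int d) j" for d j
  proof (induction d arbitrary: j)
    case 0
    have "times_x0_plus_x2 X N (j + 1) = times_x0_plus_x2 Y N (j + 1)" using assms(1) by simp
    then show ?case using assms(2,3)[of "N - 1"] by (simp add: times_x0_plus_x2_def)
  next
    case (Suc d)
    have "times_x0_plus_x2 X (N + int (Suc d)) (j + 1) = times_x0_plus_x2 Y (N + int (Suc d)) (j + 1)"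
      using assms(1) by simp
    then show ?case using Suc.IH[of "j + 1"] by (simp add: times_x0_plus_x2_def algebra_simps)
  qed
  have "X q j = Y q j" for q j
  proof (cases "q < N")
    case False
    then have "q = N + int (nat (q - N))" by simp
    then show ?thesis using shifted by metis
  qed (simp add: assms(2,3))
  then show ?thesis by (simp add: fun_eq_iff)
qed

lemma mulpow_cancel:
  assumes "mulpow k X = mulpow k Y"
    and "\<And>q j. q < N \<Longrightarrow> X q j = 0" "\<And>q j. q < N \<Longrightarrow> Y q j = 0"
  shows "X = Y"
  using assms(1)
proof (induction k)
  case (Suc k)
  have "mulpow k X = mulpow k Y"
    by (rule times_x0_plus_x2_cancel[OF _ mulpow_truncated[OF assms(2)] mulpow_truncated[OF assms(3)]])
      (use Suc.prems in \<open>simp add: mulpow_Suc\<close>)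
  then show ?case by (rule Suc.IH)
qed simp

lemma truncated2_shift_x0: "truncated2 G M N \<Longrightarrow> truncated2 (shift_x0 k G) (M + int k) N"
  by (auto simp: truncated2_def shift_x0_def)

lemma shift_x0_0 [simp]: "shift_x0 0 G = G"
  by (simp add: fun_eq_iff shift_x0_def)

lemma shift_x0_shift_x0: "shift_x0 k (shift_x0 r G) = shift_x0 (k + r) G"
  by (simp add: fun_eq_iff shift_x0_def algebra_simps)

lemma finite_support_antidiagonal:
  assumes "truncated2 G M N"
  shows "finite {t. G (a + t) (b - t) \<noteq> 0}"
proof (rule finite_subset[of _ "{M - a..b - N}"])
  show "{t. G (a + t) (b - t) \<noteq> 0} \<subseteq> {M - a..b - N}"
  proof
    fix t assume "t \<in> {t. G (a + t) (b - t) \<noteq> 0}"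
    then have "\<not> a + t < M" "\<not> b - t < N"
      using assms unfolding truncated2_def by blast+
    then show "t \<in> {M - a..b - N}" by simp
  qed
qed simp

lemma expand_x2_times:
  assumes "truncated2 G M N"
  shows "times_x0_plus_x2 (expand_x2 G) = expand_x2 (shift_x0 1 G)"
proof (intro ext)
  fix q j
  define f1 where "f1 s = (if 0 \<le> s then sc (of_int (q + s) gchoose nat s) (G (q + s) (j - 1 - s)) else 0)" for s
  define f2 where "f2 s = (if 0 \<le> s then sc (of_int (q - 1 + s) gchoose nat s) (G (q - 1 + s) (j - s)) else 0)" for s
  have e1: "expand_x2 G q (j - 1) = Sum_any (\<lambda>s. f1 (s - 1))"
    using Sum_any_bij_reindex[OF bij_diff_right, of f1 1] by (simp add: expand_x2_def f1_def)
  have e2: "expand_x2 G (q - 1) j = Sum_any f2" unfolding expand_x2_def f2_def by simp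
  have fin1: "finite {s. f1 (s - 1) \<noteq> 0}"
    by (rule finite_subset[OF _ finite_support_antidiagonal[OF assms, of "q - 1" j]])
      (auto simp: f1_def algebra_simps split: if_splits)
  have fin2: "finite {s. f2 s \<noteq> 0}"
    by (rule finite_subset[OF _ finite_support_antidiagonal[OF assms, of "q - 1" j]])
      (auto simp: f2_def split: if_splits)
  have "times_x0_plus_x2 (expand_x2 G) q j = Sum_any (\<lambda>s. f1 (s - 1) + f2 s)"
    by (simp add: times_x0_plus_x2_def e1 e2 Sum_any.distrib[OF fin1 fin2])
  also have "\<dots> = expand_x2 (shift_x0 1 G) q j"
    unfolding expand_x2_def
  proof (rule Sum_any.cong)
    fix s :: int
    consider "s < 0" | "s = 0" | "1 \<le> s" by linarith
    then show "f1 (s - 1) + f2 s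
        = (if 0 \<le> s then sc (of_int (q + s) gchoose nat s) (shift_x0 1 G (q + s) (j - s)) else 0)"
    proof cases
      case 3
      have "f1 (s - 1) = sc (of_int (q + s - 1) gchoose nat (s - 1)) (G (q + s - 1) (j - s))"
        "f2 s = sc (of_int (q + s - 1) gchoose nat s) (G (q + s - 1) (j - s))"
        using 3 by (simp_all add: f1_def f2_def algebra_simps)
      then have "f1 (s - 1) + f2 s = sc (of_int (q + s) gchoose nat s) (G (q + s - 1) (j - s))"
        by (simp only: sc_add_left[symmetric] gbinomial_int_pascal[OF 3])
      then show ?thesis
        using 3 by (simp add: shift_x0_def)
    qed (simp_all add: f1_def f2_def shift_x0_def)
  qed
  finally show "times_x0_plus_x2 (expand_x2 G) q j = expand_x2 (shift_x0 1 G) q j" .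
qed

lemma expand_x0_times:
  assumes "truncated2 G M N"
  shows "times_x0_plus_x2 (expand_x0 G) = expand_x0 (shift_x0 1 G)"
proof (intro ext)
  fix q j
  define g1 where "g1 t = sc (of_int (q + t) gchoose nat q) (G (q + t) (j - 1 - t))" for t
  define g2 where "g2 t = sc (of_int (q - 1 + t) gchoose nat (q - 1)) (G (q - 1 + t) (j - t))" for t
  have fin1: "finite {t. g1 (t - 1) \<noteq> 0}"
    by (rule finite_subset[OF _ finite_support_antidiagonal[OF assms, of "q - 1" j]])
      (auto simp: g1_def algebra_simps)
  have fin2: "finite {t. g2 t \<noteq> 0}"
    by (rule finite_subset[OF _ finite_support_antidiagonal[OF assms, of "q - 1" j]])
      (auto simp: g2_def)
  have e1: "expand_x0 G q (j - 1) = (if 0 \<le> q then Sum_any (\<lambda>t. g1 (t - 1)) else 0)"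
    using Sum_any_bij_reindex[OF bij_diff_right, of g1 1] by (simp add: expand_x0_def g1_def)
  have e2: "expand_x0 G (q - 1) j = (if 1 \<le> q then Sum_any g2 else 0)"
    unfolding expand_x0_def g2_def by simp
  consider "q < 0" | "q = 0" | "1 \<le> q" by linarith
  then show "times_x0_plus_x2 (expand_x0 G) q j = expand_x0 (shift_x0 1 G) q j"
  proof cases
    case 1
    then show ?thesis by (simp add: times_x0_plus_x2_def expand_x0_def)
  next
    case 2
    have "times_x0_plus_x2 (expand_x0 G) q j = Sum_any (\<lambda>t. g1 (t - 1))"
      unfolding times_x0_plus_x2_def e1 e2 using 2 by simp
    also have "\<dots> = expand_x0 (shift_x0 1 G) q j"
      using 2 by (simp add: expand_x0_def g1_def shift_x0_def algebra_simps)
    finally show ?thesis .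
  next
    case 3
    then have "times_x0_plus_x2 (expand_x0 G) q j = Sum_any (\<lambda>t. g1 (t - 1) + g2 t)"
      by (simp add: times_x0_plus_x2_def e1 e2 Sum_any.distrib[OF fin1 fin2])
    also have "\<dots> = expand_x0 (shift_x0 1 G) q j"
      unfolding expand_x0_def if_P[OF order.trans[OF zero_le_one 3]]
    proof (rule Sum_any.cong)
      fix t
      have "g1 (t - 1) = sc (of_int (t + q - 1) gchoose nat q) (G (q + t - 1) (j - t))"
        "g2 t = sc (of_int (t + q - 1) gchoose nat (q - 1)) (G (q + t - 1) (j - t))"
        by (simp_all add: g1_def g2_def algebra_simps)
      then have "g2 t + g1 (t - 1) = sc (of_int (t + q) gchoose nat q) (G (q + t - 1) (j - t))"
        by (simp only: sc_add_left[symmetric] gbinomial_int_pascal[OF 3])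
      then show "g1 (t - 1) + g2 t = sc (of_int (q + t) gchoose nat q) (shift_x0 1 G (q + t) (j - t))"
        by (simp add: shift_x0_def add.commute)
    qed
    finally show ?thesis .
  qed
qed

lemma mulpow_expand_x2: "truncated2 G M N \<Longrightarrow> mulpow k (expand_x2 G) = expand_x2 (shift_x0 k G)"
proof (induction k)
  case (Suc k)
  then show ?case
    by (simp add: mulpow_Suc expand_x2_times[OF truncated2_shift_x0[OF Suc.prems]] shift_x0_shift_x0)
qed simp

lemma mulpow_expand_x0: "truncated2 G M N \<Longrightarrow> mulpow k (expand_x0 G) = expand_x0 (shift_x0 k G)"
proof (induction k)
  case (Suc k)
  then show ?case
    by (simp add: mulpow_Suc expand_x0_times[OF truncated2_shift_x0[OF Suc.prems]] shift_x0_shift_x0)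
qed simp

lemma assoc_lhs_eq_expand_x2:
  "assoc_lhs Y1 Y2 u v w = expand_x2 (\<lambda>n m. Y1 u (Y2 v w m) n)"
proof (intro ext)
  fix q j
  have "expand_x2 (\<lambda>n m. Y1 u (Y2 v w m) n) q j = Sum_any (\<lambda>k::nat. (\<lambda>s. if 0 \<le> s then
      sc (of_int (q + s) gchoose nat s) (Y1 u (Y2 v w (j - s)) (q + s)) else 0) (int k))"
    unfolding expand_x2_def
    by (rule Sum_any_inj_reindex[symmetric])
      (auto split: if_splits intro: range_eqI[of _ _ "nat _"] simp: inj_of_nat)
  then show "assoc_lhs Y1 Y2 u v w q j = expand_x2 (\<lambda>n m. Y1 u (Y2 v w m) n) q j"
    by (simp add: assoc_lhs_def)
qed

lemma expand_x2_eq_expand_x0: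
  assumes "\<And>n m. n < 0 \<Longrightarrow> G n m = 0"
  shows "expand_x2 G = expand_x0 G"
proof (intro ext)
  fix q j
  have coeff: "(if 0 \<le> s then sc (of_int (q + s) gchoose nat s) (G (q + s) (j - s)) else 0)
      = (if 0 \<le> q then sc (of_int (q + s) gchoose nat q) (G (q + s) (j - s)) else 0)" for s
  proof (cases "q + s < 0")
    case False
    consider "0 \<le> s" "0 \<le> q" | "0 \<le> s" "q < 0" | "s < 0" "0 \<le> q" | "s < 0" "q < 0" by linarith
    then show ?thesis
    proof cases
      case 1
      then show ?thesis using gbinomial_int_symmetric[of q s] by simp
    next
      case 2
      then show ?thesis using False gbinomial_int_eq_0[of "q + s" "nat s"] by simp
    next
      case 3
      then show ?thesis using False gbinomial_int_eq_0[of "q + s" "nat q"] by simp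
    qed simp
  qed (simp add: assms)
  show "expand_x2 G q j = expand_x0 G q j"
    unfolding expand_x2_def expand_x0_def coeff by (cases "0 \<le> q") simp_all
qed

text \<open>After multiplying by \<open>x\<^sub>0\<^sup>k\<close> with \<open>n + k = -1\<close>, the lowest power \<open>x\<^sub>1\<^sup>n\<close> of \<open>G\<close>
  alone contributes to the coefficient of \<open>x\<^sub>0\<^sup>q\<close> for \<open>q < 0\<close>, because \<open>(q + s choose s) = 0\<close>
  for \<open>0 \<le> q + s < s\<close>.\<close>

lemma expand_x2_lowest_term:
  assumes low: "\<And>n' m'. n' < n \<Longrightarrow> G n' m' = 0" and n: "n < 0" and q: "q < 0"
  shows "expand_x2 (shift_x0 (nat (- 1 - n)) G) q (m - q - 1)
       = sc ((- 1) gchoose nat (- 1 - q)) (G n m)"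
proof -
  define k where "k = nat (- 1 - n)"
  have k: "int k = - 1 - n" using n by (simp add: k_def)
  have coeff: "(if 0 \<le> s then sc (of_int (q + s) gchoose nat s) (shift_x0 k G (q + s) (m - q - 1 - s))
        else 0) = (if s = - 1 - q then sc ((- 1) gchoose nat (- 1 - q)) (G n m) else 0)" for s
  proof -
    consider "s < 0" | "0 \<le> s" "s < - 1 - q" | "s = - 1 - q" | "- 1 - q < s" by linarith
    then show ?thesis
    proof cases
      case 2
      then show ?thesis using k low by (simp add: shift_x0_def)
    next
      case 4
      then have "(of_int (q + s) gchoose nat s :: complex) = 0"
        using q by (intro gbinomial_int_eq_0) auto
      then show ?thesis using 4 by simp
    qed (use k q in \<open>simp_all add: shift_x0_def\<close>)
  qed
  show ?thesis
    unfolding expand_x2_def k_def[symmetric] coeff by simp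
qed

lemma expand_x2_truncated_imp_no_negative:
  assumes trunc: "truncated2 G M N" and low: "\<And>q j. q < Q \<Longrightarrow> expand_x2 G q j = 0"
  shows "n < 0 \<Longrightarrow> G n m = 0"
proof -
  define q where "q = min Q 0 - 1"
  have q: "q < Q" by (simp add: q_def)
  have van: "expand_x2 (shift_x0 k G) q j = 0" for k j
    using mulpow_truncated[of Q "expand_x2 G", OF low q] by (simp add: mulpow_expand_x2[OF trunc])
  have "\<forall>n m. n < M + int d \<longrightarrow> n < 0 \<longrightarrow> G n m = 0" for d
  proof (induction d)
    case 0
    then show ?case using trunc by (simp add: truncated2_def)
  next
    case (Suc d)
    show ?case
    proof (intro allI impI)
      fix n m assume n: "n < M + int (Suc d)" "n < 0"
      then have "sc ((- 1) gchoose nat (- 1 - q)) (G n m)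
          = expand_x2 (shift_x0 (nat (- 1 - n)) G) q (m - q - 1)"
        using Suc.IH by (intro expand_x2_lowest_term[symmetric]) (auto simp: q_def)
      then show "G n m = 0" by (simp add: van sc_eq_zero_iff gbinomial_minus_one_neq_0)
    qed
  qed
  moreover have "n < M + int (nat (n - M) + 1)" by simp
  ultimately show "n < 0 \<Longrightarrow> G n m = 0" by blast
qed

lemma nva_module_assoc:
  assumes Y: "nonlocal_va vac Y" and W: "nva_module vac Y YW"
    and fin: "\<And>h w. fin_laurent (YW h w)"
  shows "YW (Y a b q) w i = (if 0 \<le> q then
           Sum_any (\<lambda>p. sc (of_int (i - p + q) gchoose nat q) (YW a (YW b w p) (i - p + q))) else 0)"
proof -
  define F where "F n m = YW a (YW b w m) n" for n m
  define A where "A = assoc_rhs Y YW a b w"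
  have lin_W: "lin (\<lambda>x. YW a x n)" for n
    using W by (simp add: nva_module_def bilin_right)
  obtain M where M: "\<And>m n. n < M \<Longrightarrow> F n m = 0"
  proof (rule fin_laurent_uniform_truncation[OF fin, of "\<lambda>x _ n. YW a x n"])
    show "\<exists>N. \<forall>k m. m < N \<longrightarrow> YW a x m = 0" for x :: "'b vec"
      using W by (auto simp: nva_module_def laurent_def)
  qed (use lin_W F_def in auto)
  obtain N where N: "\<And>m. m < N \<Longrightarrow> YW b w m = 0"
    using W laurentE by (auto simp: nva_module_def) blast
  obtain NA where NA: "\<And>q. q < NA \<Longrightarrow> Y a b q = 0"
    using Y laurentE by (auto simp: nonlocal_va_def) blast
  have trunc: "truncated2 F M N"
    using M N lin_zero[OF lin_W] by (auto simp: truncated2_def F_def)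
  have A0: "A q j = 0" if "q < min NA 0" for q j
    using NA that by (simp add: A_def assoc_rhs_def bilin_left Y[unfolded nonlocal_va_def]
        lin_zero[of "\<lambda>x. YW x w j"] W[unfolded nva_module_def])
  have "assoc_lhs YW YW a b w = expand_x2 F"
    unfolding F_def by (rule assoc_lhs_eq_expand_x2)
  moreover obtain l where "mulpow l (assoc_lhs YW YW a b w) = mulpow l A"
    using W unfolding nva_module_def A_def by blast
  ultimately have l: "expand_x2 (shift_x0 l F) = mulpow l A"
    by (simp add: mulpow_expand_x2[OF trunc])
  have "shift_x0 l F n m = 0" if "n < 0" for n m
    by (rule expand_x2_truncated_imp_no_negative[OF truncated2_shift_x0[OF trunc] _ that,
          where Q = "min NA 0"]) (unfold l, rule mulpow_truncated[OF A0])
  then have "mulpow l (expand_x0 F) = mulpow l A"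
    by (simp add: mulpow_expand_x0[OF trunc] expand_x2_eq_expand_x0[symmetric] l)
  then have "A = expand_x0 F"
    by (rule mulpow_cancel[symmetric, of _ _ _ "min NA 0"]) (auto simp: A0 expand_x0_def)
  then have "YW (Y a b q) w i = expand_x0 F q i"
    by (simp add: A_def assoc_rhs_def fun_eq_iff)
  also have "\<dots> = (if 0 \<le> q then
      Sum_any (\<lambda>p. sc (of_int (i - p + q) gchoose nat q) (YW a (YW b w p) (i - p + q))) else 0)"
    using Sum_any_bij_reindex[OF bij_diff, of "\<lambda>t. sc (of_int (q + t) gchoose nat q) (F (q + t) (i - t))" i]
    by (simp add: expand_x0_def F_def algebra_simps)
  finally show ?thesis .
qed

section \<open>The twisting operator of a comodule-algebra\<close>

text \<open>The coefficient of \<open>R\<^sup>2\<^sup>3(x\<^sub>1) R\<^sup>1\<^sup>2(x\<^sub>1 + x\<^sub>2)\<close>: a binomial coefficient from expanding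
  \<open>(x\<^sub>1 + x\<^sub>2)\<^sup>p\<^sup>+\<^sup>q\<close>, and the signs of \<open>Y(h, -x)\<close> in both factors.\<close>

definition hexagon1_coeff :: "int \<Rightarrow> int \<Rightarrow> int \<Rightarrow> complex" where
  "hexagon1_coeff i q p = (of_int (p + q) gchoose nat q) * (- 1) powi (p + q) * (- 1) powi (i - p)"

locale smash =
  fixes vacH :: "'h vec" and YH :: "'h vec \<Rightarrow> 'h vec \<Rightarrow> int \<Rightarrow> 'h vec"
    and \<Delta> :: "'h vec \<Rightarrow> ('h \<times> 'h) vec" and \<epsilon> :: "'h vec \<Rightarrow> complex"
    and vacU :: "'u vec" and YU :: "'u vec \<Rightarrow> 'u vec \<Rightarrow> int \<Rightarrow> 'u vec"
    and YHU :: "'h vec \<Rightarrow> 'u vec \<Rightarrow> int \<Rightarrow> 'u vec"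
    and vacV :: "'v vec" and YV :: "'v vec \<Rightarrow> 'v vec \<Rightarrow> int \<Rightarrow> 'v vec"
    and \<rho> :: "'v vec \<Rightarrow> ('h \<times> 'v) vec"
  assumes bialg: "nonlocal_vertex_bialgebra vacH YH \<Delta> \<epsilon>"
    and modalg: "module_algebra vacH YH \<Delta> \<epsilon> vacU YU YHU"
    and comod: "comodule_algebra vacH YH \<Delta> \<epsilon> vacV YV \<rho>"
begin

abbreviation "R \<equiv> Rsmash YHU \<rho>"

lemma bilin_YU: "bilin YU" and laurent_YU: "laurent (YU u u')"
  using modalg unfolding module_algebra_def nonlocal_va_def by auto

lemma bilin_YV: "bilin YV" and laurent_YV: "laurent (YV v v')"
  using comod unfolding comodule_algebra_def nonlocal_va_def by auto

lemma laurent_YH: "laurent (YH h h')"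
  using bialg unfolding nonlocal_vertex_bialgebra_def nonlocal_va_def by auto

lemma bilin_YHU: "bilin YHU" and laurent_YHU: "laurent (YHU h u)"
  and fin_laurent_YHU: "fin_laurent (YHU h u)"
  and YHU_vacH: "YHU vacH u = delta0 u"
  and YHU_vacU: "YHU h vacU = delta0 (sc (\<epsilon> h) vacU)"
  and YHU_YU: "YHU h (YU u u' b) a = modalg_rhs YU YHU \<Delta> h u u' a b"
  using modalg unfolding module_algebra_def nva_module_def by auto

lemma lin_rho: "lin \<rho>"
  and rho_coassoc: "lmap (\<lambda>(a, b). tens (bas a) (\<rho> (bas b))) (\<rho> v)
          = rassoc (lmap (\<lambda>(a, b). tens (\<Delta> (bas a)) (bas b)) (\<rho> v))"
  and rho_counit: "lmap (\<lambda>(a, b). sc (\<epsilon> (bas a)) (bas b)) (\<rho> v) = v"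
  and rho_vac: "\<rho> vacV = tens vacH vacV"
  and rho_YV: "\<rho> (YV v v' n) = Ytens YH YV (\<rho> v) (\<rho> v') n"
  using comod unfolding comodule_algebra_def by auto

lemma YHU_YH: "YHU (YH a b q) u i = (if 0 \<le> q then
    Sum_any (\<lambda>p. sc (of_int (i - p + q) gchoose nat q) (YHU a (YHU b u p) (i - p + q))) else 0)"
  by (rule nva_module_assoc[OF _ _ fin_laurent_YHU])
    (use bialg modalg in \<open>auto simp: nonlocal_vertex_bialgebra_def module_algebra_def\<close>)

lemma lin_YU_left: "lin (\<lambda>u. YU u u' n)" and lin_YU_right: "lin (\<lambda>u'. YU u u' n)"
  by (simp_all add: bilin_left bilin_right bilin_YU)

lemma lin_YHU_left: "lin (\<lambda>h. YHU h u n)" and lin_YHU_right: "lin (\<lambda>u. YHU h u n)"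
  by (simp_all add: bilin_left bilin_right bilin_YHU)

lemma YU_zero [simp]: "YU 0 u n = 0" "YU u 0 n = 0"
  using lin_zero[OF lin_YU_left] lin_zero[OF lin_YU_right] by simp_all

lemma YV_zero [simp]: "YV 0 v n = 0" "YV v 0 n = 0"
  using lin_zero[OF bilin_left[OF bilin_YV]] lin_zero[OF bilin_right[OF bilin_YV]] by simp_all

lemma YHU_zero [simp]: "YHU 0 u n = 0" "YHU h 0 n = 0"
  using lin_zero[OF lin_YHU_left] lin_zero[OF lin_YHU_right] by simp_all

lemma Rsmash_tens:
  "R (tens v u) n = lmap (\<lambda>(c, d). sc ((- 1) powi n) (tens (YHU (bas c) u n) (bas d))) (\<rho> v)"
proof -
  define \<Psi> :: "('h \<times> 'v) vec \<Rightarrow> ('u \<times> 'v) vec" where "\<Psi> = lmap (\<lambda>(c, d). sc ((- 1) powi n) (tens (YHU (bas c) u n) (bas d)))"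
  have lin: "lin (\<lambda>x. lmap (\<lambda>(c, d). sc ((- 1) powi n) (tens (YHU (bas c) x n) (bas d))) (\<rho> (bas a)))"
    for a
    by (rule lin_lmap_argI) (auto simp: split_def intro!: lin_scI lin_tens_leftI lin_YHU_right)
  have "R (tens v u) n
      = lmap (\<lambda>a. lmap (\<lambda>(c, d). sc ((- 1) powi n) (tens (YHU (bas c) u n) (bas d))) (\<rho> (bas a))) v"
    unfolding Rsmash_def lmap_tens by (simp add: lin_lmap_bas[OF lin])
  also have "\<dots> = \<Psi> (lmap (\<lambda>a. \<rho> (bas a)) v)"
    by (simp add: \<Psi>_def lmap_lmap)
  finally show ?thesis
    by (simp add: \<Psi>_def lin_lmap_bas[OF lin_rho])
qed

lemma lin_R: "lin (\<lambda>t. R t n)"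
  unfolding Rsmash_def by simp

lemma fin_laurent_R: "fin_laurent (R t)"
  unfolding Rsmash_def
  by (intro fin_laurent_lmap)
    (auto simp: split_def intro!: fin_laurent_lmap fin_laurent_sc fin_laurent_lin[OF fin_laurent_YHU]
      lin_tens_left)

lemma R_vacU: "R (tens v vacU) = delta0 (tens vacU v)"
proof (rule ext)
  fix n
  have "R (tens v vacU) 0 = lmap (\<lambda>(c, d). tens vacU (sc (\<epsilon> (bas c)) (bas d))) (\<rho> v)"
    by (simp add: Rsmash_tens YHU_vacU delta0_def tens_sc_left tens_sc_right)
  also have "\<dots> = tens vacU v"
    by (simp add: tens_lmap_right[symmetric] split_def rho_counit[unfolded split_def])
  finally show "R (tens v vacU) n = delta0 (tens vacU v) n"
    by (cases "n = 0") (simp_all add: Rsmash_tens YHU_vacU delta0_def split_def)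
qed

lemma R_vacV: "R (tens vacV u) = delta0 (tens u vacV)"
proof (rule ext)
  fix n
  define \<phi> where "\<phi> x = sc ((- 1) powi n) (tens (YHU x u n) vacV)" for x
  have lin: "lin \<phi>" unfolding \<phi>_def by (intro lin_scI lin_tens_leftI lin_YHU_left)
  have "R (tens vacV u) n = lmap (\<lambda>c. \<phi> (bas c)) vacH"
    by (simp add: Rsmash_tens rho_vac lmap_tens \<phi>_def lmap_fun_sc tens_lmap_right[symmetric])
  also have "\<dots> = delta0 (tens u vacV) n"
    unfolding lin_lmap_bas[OF lin] by (simp add: \<phi>_def YHU_vacH delta0_def)
  finally show "R (tens vacV u) n = delta0 (tens u vacV) n" .
qed

lemma YU_YHU_truncation:
  obtains N where "\<And>k m. m < N \<Longrightarrow> YU x (YHU h w k) m = 0"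
proof (rule fin_laurent_uniform_truncation[OF fin_laurent_YHU, of "\<lambda>y _ m. YU x y m"])
  show "\<exists>N. \<forall>k m. m < N \<longrightarrow> YU x y m = 0" for y
    using laurent_YU by (auto simp: laurent_def)
qed (use lin_YU_right that in auto)

lemma finite_support_smash_term:
  "finite {(k, m). tens (YU x (YHU h w k) m) (YV y z (n - k - m)) \<noteq> 0}"
proof -
  obtain Nk where Nk: "\<And>k. k < Nk \<Longrightarrow> YHU h w k = 0" using laurentE[OF laurent_YHU] by blast
  obtain NU where NU: "\<And>k m. m < NU \<Longrightarrow> YU x (YHU h w k) m = 0" using YU_YHU_truncation by blast
  obtain NV where NV: "\<And>m. m < NV \<Longrightarrow> YV y z m = 0" using laurentE[OF laurent_YV] by blast
  show ?thesis
  proof (rule finite_support_box)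
    fix k m assume "tens (YU x (YHU h w k) m) (YV y z (n - k - m)) \<noteq> 0"
    then have "YHU h w k \<noteq> 0" "YU x (YHU h w k) m \<noteq> 0" "YV y z (n - k - m) \<noteq> 0"
      by auto
    then have "\<not> k < Nk" "\<not> m < NU" "\<not> n - k - m < NV" using Nk NU NV by blast+
    then show "Nk \<le> k \<and> k \<le> n - NU - NV \<and> NU \<le> m \<and> m \<le> n - NV - Nk" by linarith
  qed
qed

lemma Ytwisted_term:
  "lmap (\<lambda>(c, d). Sum_any (\<lambda>m. tens (YU x (bas c) m) (YV (bas d) y (n - k - m)))) (R (tens v u) k)
   = sc ((- 1) powi k) (lmap (\<lambda>(c, d).
       Sum_any (\<lambda>m. tens (YU x (YHU (bas c) u k) m) (YV (bas d) y (n - k - m)))) (\<rho> v))"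
proof -
  have lin: "lin (\<lambda>X. tens (YU x X m) z)" for m z
    by (intro lin_tens_leftI lin_YU_right)
  have "lmap (\<lambda>c. Sum_any (\<lambda>m. tens (YU x (bas c) m) (YV (bas d) y (n - k - m)))) X
      = Sum_any (\<lambda>m. tens (YU x X m) (YV (bas d) y (n - k - m)))" for X d
  proof -
    have "finite {m. tens (YU x (bas c) m) (YV (bas d) y (n - k - m)) \<noteq> 0}" for c
      using finite_support_tens_conv[OF laurent_YU laurent_YV, of x "bas c" "bas d" y "n - k"]
      by simp
    then show ?thesis
      by (simp add: lmap_Sum_any lin_lmap_bas[OF lin])
  qed
  then show ?thesis
    by (simp add: Rsmash_tens lmap_lmap split_def lmap_sc lmap_tens lmap_fun_sc)
qed

lemma smash_eq_twisted_basis: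
  "lmap (\<lambda>(c, d). Sum_any (\<lambda>(m, q). tens (YU x (YHU (bas c) u q) (m - q)) (YV (bas d) y (n - m))))
      (\<rho> v)
 = Sum_any (\<lambda>k. sc ((- 1) powi k) (lmap (\<lambda>(c, d). Sum_any (\<lambda>m. tens (YU x (bas c) m)
      (YV (bas d) y (n - k - m)))) (R (tens v u) k)))"
proof -
  define g where "g c d k m = tens (YU x (YHU (bas c) u k) m) (YV (bas d) y (n - k - m))" for c d k m
  have fin: "finite {(k, m). g c d k m \<noteq> 0}" for c d
    unfolding g_def by (rule finite_support_smash_term)
  have shear: "bij (\<lambda>(m::int, q::int). (q, m - q))"
    by (rule bij_betw_byWitness[where f'="\<lambda>(k, m). (m + k, k)"]) auto
  have "Sum_any (\<lambda>(m, q). tens (YU x (YHU (bas c) u q) (m - q)) (YV (bas d) y (n - m)))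
      = Sum_any (\<lambda>k. Sum_any (g c d k))" for c d
    unfolding Sum_any_Sum_any[OF fin]
    using Sum_any_bij_reindex[OF shear, of "\<lambda>(k, m). g c d k m"] by (simp add: split_def g_def)
  moreover have "Sum_any (\<lambda>k. lmap (\<lambda>(c, d). Sum_any (g c d k)) (\<rho> v))
      = lmap (\<lambda>(c, d). Sum_any (\<lambda>k. Sum_any (g c d k))) (\<rho> v)"
    by (rule lmap_split_Sum_any[symmetric]) (rule finite_support_Sum_any[OF fin])
  ultimately show ?thesis
    by (simp add: Ytwisted_term g_def power_int_mult_distrib[symmetric] del: tens_bas_bas)
qed

lemma smash_eq_twisted: "Ysmash YU YV YHU \<rho> = Ytwisted YU YV R"
  unfolding Ysmash_def Ytwisted_def lmap2_def
  by (intro ext lmap_pair_cong) (simp only: prod.case smash_eq_twisted_basis)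

lemma op12r_R_tens:
  "op12r R (tens v (tens u u')) n
     = lmap (\<lambda>(c, d). sc ((- 1) powi n) (tens (YHU (bas c) u n) (tens (bas d) u'))) (\<rho> v)"
proof -
  have "op12r R (tens v (tens u u')) n = rassoc (tens (R (tens v u) n) u')"
    by (simp add: op12r_def op12_tens[OF lin_R])
  also have "\<dots> = rassoc (lmap (\<lambda>(c, d). sc ((- 1) powi n) (tens (tens (YHU (bas c) u n) (bas d)) u')) (\<rho> v))"
    by (simp only: Rsmash_tens tens_lmap_left) (simp add: split_def tens_sc_left)
  also have "\<dots> = lmap (\<lambda>(c, d). sc ((- 1) powi n) (tens (YHU (bas c) u n) (tens (bas d) u'))) (\<rho> v)"
    by (simp add: lin_lmap_comm[OF lin_rassoc] lin_scale[OF lin_rassoc] split_def rassoc_tens)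
  finally show ?thesis .
qed

lemma lmap_rho_coassoc:
  "lmap (\<lambda>(c, d). lmap (\<lambda>(e, f). G e f d) (\<Delta> (bas c))) (\<rho> v)
   = lmap (\<lambda>(c, d). lmap (\<lambda>(c', d'). G c c' d') (\<rho> (bas d))) (\<rho> v)"
proof -
  define \<Psi> where "\<Psi> = lmap (\<lambda>(a, b, c). G a b c)"
  have "\<Psi> (lmap (\<lambda>(a, b). tens (bas a) (\<rho> (bas b))) (\<rho> v))
      = lmap (\<lambda>(c, d). lmap (\<lambda>(c', d'). G c c' d') (\<rho> (bas d))) (\<rho> v)"
    unfolding \<Psi>_def lmap_lmap by (rule lmap_pair_cong) (simp add: lmap_tens split_def)
  moreover have "\<Psi> (rassoc (lmap (\<lambda>(a, b). tens (\<Delta> (bas a)) (bas b)) (\<rho> v)))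
      = lmap (\<lambda>(c, d). lmap (\<lambda>(e, f). G e f d) (\<Delta> (bas c))) (\<rho> v)"
    unfolding \<Psi>_def rassoc_def lmap_lmap by (rule lmap_pair_cong) (simp add: lmap_tens split_def)
  ultimately show ?thesis using rho_coassoc[of v] by simp
qed

lemma YU_YHU_left_truncation:
  obtains N where "\<And>m n. n < N \<Longrightarrow> YU (YHU h u m) x n = 0"
proof (rule fin_laurent_uniform_truncation[OF fin_laurent_YHU, of "\<lambda>y _ n. YU y x n"])
  show "\<exists>N. \<forall>k n. n < N \<longrightarrow> YU y x n = 0" for y
    using laurent_YU by (auto simp: laurent_def)
qed (use lin_YU_left that in auto)

lemma YU_YHU_YHU_truncation:
  obtains N where "\<And>k m n. n < N \<Longrightarrow> YU (YHU h u m) (YHU h' u' k) n = 0"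
proof (rule fin_laurent_uniform_truncation[OF fin_laurent_YHU, of "\<lambda>y m n. YU (YHU h u m) y n"])
  show "\<exists>N. \<forall>m n. n < N \<longrightarrow> YU (YHU h u m) y n = 0" for y
    using YU_YHU_left_truncation by metis
qed (use lin_YU_right that in auto)

lemma finite_support_hexagon1_inner:
  "finite {p. (if 0 \<le> q then sc (K p) (tens (YHU h u (p + q)) (tens (YHU h' u' (i - p)) z)) else 0) \<noteq> 0}"
proof -
  obtain N1 where N1: "\<And>n. n < N1 \<Longrightarrow> YHU h u n = 0" using laurentE[OF laurent_YHU] by blast
  obtain N2 where N2: "\<And>n. n < N2 \<Longrightarrow> YHU h' u' n = 0" using laurentE[OF laurent_YHU] by blast
  have "p \<in> {N1 - q..i - N2}"
    if "(if 0 \<le> q then sc (K p) (tens (YHU h u (p + q)) (tens (YHU h' u' (i - p)) z)) else 0) \<noteq> 0" for p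
  proof -
    have "YHU h u (p + q) \<noteq> 0" "YHU h' u' (i - p) \<noteq> 0"
      using that by (auto split: if_splits)
    then have "\<not> p + q < N1" "\<not> i - p < N2" using N1 N2 by blast+
    then show ?thesis by auto
  qed
  then show ?thesis by (auto intro: finite_subset[of _ "{N1 - q..i - N2}"])
qed

lemma finite_support_hexagon1:
  "finite {(q, p). (if 0 \<le> q then
     sc (K q p) (tens (YU (YHU h u (p + q)) (YHU h' u' (i - p)) (j - q)) z) else 0) \<noteq> 0}"
proof -
  obtain N1 where N1: "\<And>n. n < N1 \<Longrightarrow> YHU h u n = 0" using laurentE[OF laurent_YHU] by blast
  obtain N2 where N2: "\<And>n. n < N2 \<Longrightarrow> YHU h' u' n = 0" using laurentE[OF laurent_YHU] by blast
  obtain N3 where N3: "\<And>k m n. n < N3 \<Longrightarrow> YU (YHU h u m) (YHU h' u' k) n = 0"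
    using YU_YHU_YHU_truncation by blast
  show ?thesis
  proof (rule finite_support_box)
    fix q p
    assume "(if 0 \<le> q then sc (K q p) (tens (YU (YHU h u (p + q)) (YHU h' u' (i - p)) (j - q)) z)
      else 0) \<noteq> 0"
    then have "0 \<le> q" "YU (YHU h u (p + q)) (YHU h' u' (i - p)) (j - q) \<noteq> 0"
      by (auto split: if_splits)
    then have "0 \<le> q" "\<not> j - q < N3" "\<not> p + q < N1" "\<not> i - p < N2"
      using N1 N2 N3 by (metis YU_zero)+
    then show "0 \<le> q \<and> q \<le> j - N3 \<and> N1 - (j - N3) \<le> p \<and> p \<le> i - N2" by linarith
  qed
qed

lemma hexagon1_inner:
  "op23 R (at_plus (op12r R) (tens v (tens u u')) p q) (i - p)
   = lmap (\<lambda>(c, d). lmap (\<lambda>(c', d'). if 0 \<le> q then sc (hexagon1_coeff i q p)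
       (tens (YHU (bas c) u (p + q)) (tens (YHU (bas c') u' (i - p)) (bas d'))) else 0) (\<rho> (bas d))) (\<rho> v)"
proof (cases "0 \<le> q")
  case True
  have inner: "op23 R (tens (YHU (bas c) u (p + q)) (tens (bas d) u')) (i - p)
     = lmap (\<lambda>(c', d'). sc ((- 1) powi (i - p))
          (tens (YHU (bas c) u (p + q)) (tens (YHU (bas c') u' (i - p)) (bas d')))) (\<rho> (bas d))" for c d
    by (simp add: op23_tens[OF lin_R] Rsmash_tens tens_lmap_right lmap_fun_sc split_def tens_sc_right)
  show ?thesis
    using True by (simp add: at_plus_def op12r_R_tens lin_scale[OF lin_op23] lin_lmap_comm[OF lin_op23]
        split_def inner lmap_fun_sc hexagon1_coeff_def mult.assoc)
qed (simp add: at_plus_def lin_zero[OF lin_op23] split_def)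

lemma hexagon1_rhs:
  "comp2 (in_x2 (op12 (Ylin YU))) (comp2 (in_x1 (op23 R)) (at_plus (op12r R) (tens v (tens u u')))) i j
   = lmap (\<lambda>(c, d). lmap (\<lambda>(c', d'). Sum_any (\<lambda>q. Sum_any (\<lambda>p. if 0 \<le> q then
       sc (hexagon1_coeff i q p) (tens (YU (YHU (bas c) u (p + q)) (YHU (bas c') u' (i - p)) (j - q)) (bas d'))
       else 0))) (\<rho> (bas d))) (\<rho> v)"
proof -
  define W where "W c c' d' q p = (if 0 \<le> q then sc (hexagon1_coeff i q p)
    (tens (YHU (bas c) u (p + q)) (tens (YHU (bas c') u' (i - p)) (bas d'))) else 0)"
    for c c' :: 'h and d' :: 'v and q p :: int
  define T where "T c c' d' q p = (if 0 \<le> q then sc (hexagon1_coeff i q p)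
    (tens (YU (YHU (bas c) u (p + q)) (YHU (bas c') u' (i - p)) (j - q)) (bas d')) else 0)"
    for c c' :: 'h and d' :: 'v and q p :: int
  have W_fin: "finite {p. W c c' d' q p \<noteq> 0}" for c c' d' q
    unfolding W_def by (rule finite_support_hexagon1_inner)
  have T_fin: "finite {(q, p). T c c' d' q p \<noteq> 0}" for c c' d'
    unfolding T_def by (rule finite_support_hexagon1)
  have "op12 (Ylin YU) (W c c' d' q p) (j - q) = T c c' d' q p" for c c' d' q p
    by (simp add: W_def T_def lin_scale[OF lin_op12] op12_tens[OF lin_Ylin] Ylin_tens[OF bilin_YU]
        lin_zero[OF lin_op12])
  then have op12_Sum: "op12 (Ylin YU) (Sum_any (W c c' d' q)) (j - q) = Sum_any (T c c' d' q)"
    for c c' d' q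
    by (simp add: lin_Sum_any[OF lin_op12 W_fin])
  have "comp2 (in_x2 (op12 (Ylin YU))) (comp2 (in_x1 (op23 R)) (at_plus (op12r R) (tens v (tens u u')))) i j
      = Sum_any (\<lambda>q. op12 (Ylin YU) (Sum_any (\<lambda>p.
          lmap (\<lambda>(c, d). lmap (\<lambda>(c', d'). W c c' d' q p) (\<rho> (bas d))) (\<rho> v))) (j - q))"
    by (simp only: comp2_in_x2 comp2_in_x1 hexagon1_inner W_def[symmetric])
  also have "\<dots> = Sum_any (\<lambda>q. op12 (Ylin YU)
      (lmap (\<lambda>(c, d). lmap (\<lambda>(c', d'). Sum_any (W c c' d' q)) (\<rho> (bas d))) (\<rho> v)) (j - q))"
    by (simp only: Sum_any_lmap_lmap[OF W_fin])
  also have "\<dots> = Sum_any (\<lambda>q. lmap (\<lambda>(c, d). lmap (\<lambda>(c', d'). Sum_any (T c c' d' q)) (\<rho> (bas d))) (\<rho> v))"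
    by (simp add: lin_lmap_comm[OF lin_op12] split_def op12_Sum)
  also have "\<dots> = lmap (\<lambda>(c, d). lmap (\<lambda>(c', d'). Sum_any (\<lambda>q. Sum_any (T c c' d' q))) (\<rho> (bas d))) (\<rho> v)"
    by (rule Sum_any_lmap_lmap) (rule finite_support_Sum_any[OF T_fin])
  finally show ?thesis by (simp add: T_def)
qed

lemma hexagon1_lhs:
  "R (tens v (YU u u' j)) i = lmap (\<lambda>(c, d). lmap (\<lambda>(c', d'). sc ((- 1) powi i) (tens
     (Sum_any (\<lambda>(m, k). sc ((of_int m gchoose k) * (- 1) ^ k)
        (YU (YHU (bas c) u m) (YHU (bas c') u' (i - m + int k)) (j - int k)))) (bas d'))) (\<rho> (bas d))) (\<rho> v)"
proof -
  define G where "G e f d = sc ((- 1) powi i) (tens (Sum_any (\<lambda>(m, k).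
    sc ((of_int m gchoose k) * (- 1) ^ k) (YU (YHU (bas e) u m) (YHU (bas f) u' (i - m + int k))
      (j - int k)))) (bas d))" for e f :: 'h and d :: 'v
  have "R (tens v (YU u u' j)) i = lmap (\<lambda>(c, d). lmap (\<lambda>(e, f). G e f d) (\<Delta> (bas c))) (\<rho> v)"
    by (simp add: Rsmash_tens YHU_YU modalg_rhs_def G_def tens_lmap_left lmap_fun_sc split_def)
  then show ?thesis
    unfolding lmap_rho_coassoc by (simp add: G_def)
qed

lemma finite_support_modalg_sum:
  "finite {(m, k). YU (YHU h u m) (YHU h' u' (i - m + int k)) (j - int k) \<noteq> 0}"
proof -
  obtain N1 where N1: "\<And>n. n < N1 \<Longrightarrow> YHU h u n = 0" using laurentE[OF laurent_YHU] by blast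
  obtain N2 where N2: "\<And>n. n < N2 \<Longrightarrow> YHU h' u' n = 0" using laurentE[OF laurent_YHU] by blast
  obtain N3 where N3: "\<And>k m n. n < N3 \<Longrightarrow> YU (YHU h u m) (YHU h' u' k) n = 0"
    using YU_YHU_YHU_truncation by blast
  have "(m, k) \<in> {N1..i + j - N3 - N2} \<times> {..nat (j - N3)}"
    if "YU (YHU h u m) (YHU h' u' (i - m + int k)) (j - int k) \<noteq> 0" for m k
  proof -
    have "\<not> j - int k < N3" "\<not> m < N1" "\<not> i - m + int k < N2"
      using that N1 N2 N3 by (metis YU_zero)+
    then show ?thesis by auto
  qed
  then show ?thesis
    by (auto intro: finite_subset[of _ "{N1..i + j - N3 - N2} \<times> {..nat (j - N3)}"])
qed

lemma hexagon1_coeff_sum: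
  "sc ((- 1) powi i) (tens (Sum_any (\<lambda>(m, k). sc ((of_int m gchoose k) * (- 1) ^ k)
       (YU (YHU h u m) (YHU h' u' (i - m + int k)) (j - int k)))) z)
   = Sum_any (\<lambda>q. Sum_any (\<lambda>p. if 0 \<le> q then sc (hexagon1_coeff i q p)
       (tens (YU (YHU h u (p + q)) (YHU h' u' (i - p)) (j - q)) z) else 0))"
proof -
  define S where "S = (\<lambda>(m, k). sc ((of_int m gchoose k) * (- 1) ^ k)
       (YU (YHU h u m) (YHU h' u' (i - m + int k)) (j - int k)))"
  define T where "T q p = (if 0 \<le> q then sc (hexagon1_coeff i q p)
       (tens (YU (YHU h u (p + q)) (YHU h' u' (i - p)) (j - q)) z) else 0)" for q p
  define \<iota> where "\<iota> = (\<lambda>(m, k). (int k, m - int k))"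
  have "finite {x. S x \<noteq> 0}"
    by (rule finite_subset[OF _ finite_support_modalg_sum[of h u h' u' i j]]) (auto simp: S_def)
  then have "sc ((- 1) powi i) (tens (Sum_any S) z) = Sum_any (\<lambda>x. sc ((- 1) powi i) (tens (S x) z))"
    by (rule lin_Sum_any[rotated]) (intro lin_scI lin_tens_left)
  also have "\<dots> = Sum_any (\<lambda>x. (\<lambda>(q, p). T q p) (\<iota> x))"
  proof (rule Sum_any.cong, clarify)
    fix m k
    have "(- 1::complex) powi m * (- 1) powi (i - (m - int k)) = (- 1) powi i * (- 1) ^ k"
      by (simp add: power_int_add[symmetric]) (simp add: power_int_add)
    then show "sc ((- 1) powi i) (tens (S (m, k)) z) = (\<lambda>(q, p). T q p) (\<iota> (m, k))"
      by (simp add: S_def T_def \<iota>_def hexagon1_coeff_def tens_sc_left mult_ac diff_diff_eq2 diff_add_eq)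
  qed
  also have "\<dots> = Sum_any (\<lambda>(q, p). T q p)"
  proof (rule Sum_any_inj_reindex)
    show "inj \<iota>" by (auto simp: inj_def \<iota>_def)
    fix x :: "int \<times> int"
    assume "(case x of (q, p) \<Rightarrow> T q p) \<noteq> 0"
    moreover obtain q p where x: "x = (q, p)" by fastforce
    ultimately have "0 \<le> q" by (auto simp: T_def split: if_splits)
    then have "x = \<iota> (p + q, nat q)" by (simp add: \<iota>_def x)
    then show "x \<in> range \<iota>" by blast
  qed
  also have "\<dots> = Sum_any (\<lambda>q. Sum_any (T q))"
    by (rule Sum_any_Sum_any[symmetric]) (unfold T_def, rule finite_support_hexagon1)
  finally show ?thesis by (simp add: S_def T_def)
qed

lemma R_tens_YU:
  "R (tens v (YU u u' j)) i =
   comp2 (in_x2 (op12 (Ylin YU))) (comp2 (in_x1 (op23 R)) (at_plus (op12r R) (tens v (tens u u')))) i j"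
  unfolding hexagon1_lhs hexagon1_rhs hexagon1_coeff_sum ..

lemma YHU_YHU_truncation:
  obtains M where "\<And>p n. n < M \<Longrightarrow> YHU x (YHU h w p) n = 0"
proof (rule fin_laurent_uniform_truncation[OF fin_laurent_YHU, of "\<lambda>y _ n. YHU x y n"])
  show "\<exists>N. \<forall>k n. n < N \<longrightarrow> YHU x y n = 0" for y
    using laurent_YHU by (auto simp: laurent_def)
qed (use lin_YHU_right that in auto)

lemma finite_support_YHU_YHU: "finite {p. YHU h (YHU h' u p) (n - p) \<noteq> 0}"
proof -
  obtain N where N: "\<And>n. n < N \<Longrightarrow> YHU h' u n = 0" using laurentE[OF laurent_YHU] by blast
  obtain M where M: "\<And>p n. n < M \<Longrightarrow> YHU h (YHU h' u p) n = 0" using YHU_YHU_truncation by blast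
  have "p \<in> {N..n - M}" if "YHU h (YHU h' u p) (n - p) \<noteq> 0" for p
  proof -
    have "\<not> p < N" "\<not> n - p < M" using that N M by (metis YHU_zero)+
    then show ?thesis by auto
  qed
  then show ?thesis by (auto intro: finite_subset[of _ "{N..n - M}"])
qed

lemma finite_support_hexagon2:
  "finite {(q, p). (if 0 \<le> q then
     sc (K q p) (tens (YHU h (YHU h' u p) (i - p + q)) (YV y y' (j - q))) else 0) \<noteq> 0}"
proof -
  obtain N where N: "\<And>n. n < N \<Longrightarrow> YHU h' u n = 0" using laurentE[OF laurent_YHU] by blast
  obtain M where M: "\<And>p n. n < M \<Longrightarrow> YHU h (YHU h' u p) n = 0" using YHU_YHU_truncation by blast
  obtain NV where NV: "\<And>n. n < NV \<Longrightarrow> YV y y' n = 0" using laurentE[OF laurent_YV] by blast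
  show ?thesis
  proof (rule finite_support_box)
    fix q p
    assume "(if 0 \<le> q then sc (K q p) (tens (YHU h (YHU h' u p) (i - p + q)) (YV y y' (j - q)))
      else 0) \<noteq> 0"
    then have "0 \<le> q" "YHU h (YHU h' u p) (i - p + q) \<noteq> 0" "YV y y' (j - q) \<noteq> 0"
      by (auto split: if_splits)
    then have "0 \<le> q" "\<not> p < N" "\<not> i - p + q < M" "\<not> j - q < NV"
      using N M NV by (metis YHU_zero)+
    then show "0 \<le> q \<and> q \<le> j - NV \<and> N \<le> p \<and> p \<le> i + (j - NV) - M" by linarith
  qed
qed

lemma hexagon2_inner:
  "at_minus (op12r R) (op23 R (tens v (tens v' u)) p) (i - p) q
   = lmap (\<lambda>(c, d). lmap (\<lambda>(a, b). if 0 \<le> q then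
       sc ((- 1) powi i * (of_int (i - p + q) gchoose nat q))
         (tens (YHU (bas a) (YHU (bas c) u p) (i - p + q)) (tens (bas b) (bas d))) else 0) (\<rho> v)) (\<rho> v')"
proof (cases "0 \<le> q")
  case True
  have "(- 1::complex) powi q * ((- 1) powi p * (- 1) powi (i - p + q)) = (- 1) powi (i + 2 * q)"
    by (simp add: power_int_add[symmetric] algebra_simps)
  also have "\<dots> = (- 1) powi i"
    by (simp add: power_int_add power_int_mult)
  finally have sign: "(- 1::complex) ^ nat q * ((- 1) powi p * (- 1) powi (i - p + q)) = (- 1) powi i"
    using True by (simp add: power_int_def)
  have "op23 R (tens v (tens v' u)) p
      = lmap (\<lambda>(c, d). sc ((- 1) powi p) (tens v (tens (YHU (bas c) u p) (bas d)))) (\<rho> v')"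
    by (simp add: op23_tens[OF lin_R] Rsmash_tens tens_lmap_right split_def tens_sc_right)
  then show ?thesis
    using True by (simp add: at_minus_def lin_lmap_comm[OF lin_op12r] lin_scale[OF lin_op12r]
        op12r_R_tens split_def lmap_fun_sc sign[symmetric] mult_ac)
qed (simp add: at_minus_def split_def)

lemma hexagon2_rhs:
  "comp2 (in_x2 (op23 (Ylin YV))) (comp2 (at_minus (op12r R)) (ser_x1 (op23 R (tens v (tens v' u))))) i j
   = lmap (\<lambda>(c, d). lmap (\<lambda>(a, b). Sum_any (\<lambda>q. Sum_any (\<lambda>p. if 0 \<le> q then
       sc ((- 1) powi i * (of_int (i - p + q) gchoose nat q))
         (tens (YHU (bas a) (YHU (bas c) u p) (i - p + q)) (YV (bas b) (bas d) (j - q))) else 0)))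
       (\<rho> v)) (\<rho> v')"
proof -
  define W where "W a b c d q p = (if 0 \<le> q then sc ((- 1) powi i * (of_int (i - p + q) gchoose nat q))
    (tens (YHU (bas a) (YHU (bas c) u p) (i - p + q)) (tens (bas b) (bas d))) else 0)"
    for a c :: 'h and b d :: 'v and q p :: int
  define T where "T a b c d q p = (if 0 \<le> q then sc ((- 1) powi i * (of_int (i - p + q) gchoose nat q))
    (tens (YHU (bas a) (YHU (bas c) u p) (i - p + q)) (YV (bas b) (bas d) (j - q))) else 0)"
    for a c :: 'h and b d :: 'v and q p :: int
  have W_fin: "finite {p. W a b c d q p \<noteq> 0}" for a b c d q
    by (rule finite_subset[OF _ finite_support_YHU_YHU[of "bas a" "bas c" u "i + q"]])
      (auto simp: W_def algebra_simps split: if_splits)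
  have T_fin: "finite {(q, p). T a b c d q p \<noteq> 0}" for a b c d
    unfolding T_def by (rule finite_support_hexagon2)
  have "op23 (Ylin YV) (W a b c d q p) (j - q) = T a b c d q p" for a b c d q p
    by (simp add: W_def T_def lin_scale[OF lin_op23] op23_tens[OF lin_Ylin] Ylin_def lin_zero[OF lin_op23])
  then have op23_Sum: "op23 (Ylin YV) (Sum_any (W a b c d q)) (j - q) = Sum_any (T a b c d q)"
    for a b c d q
    by (simp add: lin_Sum_any[OF lin_op23 W_fin])
  have zero: "at_minus (op12r R) 0 x y = 0" for x y
    by (simp add: at_minus_def lin_zero[OF lin_op12r])
  have "comp2 (in_x2 (op23 (Ylin YV))) (comp2 (at_minus (op12r R)) (ser_x1 (op23 R (tens v (tens v' u))))) i j
      = Sum_any (\<lambda>q. op23 (Ylin YV) (Sum_any (\<lambda>p.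
          lmap (\<lambda>(c, d). lmap (\<lambda>(a, b). W a b c d q p) (\<rho> v)) (\<rho> v'))) (j - q))"
    by (simp only: comp2_in_x2 comp2_ser_x1[of "at_minus (op12r R)", OF zero] hexagon2_inner W_def[symmetric])
  also have "\<dots> = Sum_any (\<lambda>q. op23 (Ylin YV)
      (lmap (\<lambda>(c, d). lmap (\<lambda>(a, b). Sum_any (W a b c d q)) (\<rho> v)) (\<rho> v')) (j - q))"
    by (simp only: Sum_any_lmap_lmap[OF W_fin])
  also have "\<dots> = Sum_any (\<lambda>q. lmap (\<lambda>(c, d). lmap (\<lambda>(a, b). Sum_any (T a b c d q)) (\<rho> v)) (\<rho> v'))"
    by (simp add: lin_lmap_comm[OF lin_op23] split_def op23_Sum)
  also have "\<dots> = lmap (\<lambda>(c, d). lmap (\<lambda>(a, b). Sum_any (\<lambda>q. Sum_any (T a b c d q))) (\<rho> v)) (\<rho> v')"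
    by (rule Sum_any_lmap_lmap) (rule finite_support_Sum_any[OF T_fin])
  finally show ?thesis by (simp add: T_def)
qed

lemma hexagon2_lhs:
  "R (tens (YV v v' j) u) i = lmap (\<lambda>(a, b). lmap (\<lambda>(c, d). Sum_any (\<lambda>q.
     sc ((- 1) powi i) (tens (YHU (YH (bas a) (bas c) q) u i) (YV (bas b) (bas d) (j - q))))) (\<rho> v')) (\<rho> v)"
proof -
  define \<Phi> :: "('h \<times> 'v) vec \<Rightarrow> ('u \<times> 'v) vec"
    where "\<Phi> = lmap (\<lambda>(c, d). sc ((- 1) powi i) (tens (YHU (bas c) u i) (bas d)))"
  have lmap_YHU: "lmap (\<lambda>a. tens (YHU (bas a) u i) y) x = tens (YHU x u i) y" for x y
    by (rule lin_lmap_bas[OF lin_tens_leftI[OF lin_YHU_left]])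
  have \<Phi>_tens: "\<Phi> (tens x y) = sc ((- 1) powi i) (tens (YHU x u i) y)" for x y
    by (simp add: \<Phi>_def lmap_tens lmap_fun_sc tens_lmap_right[symmetric] lmap_YHU)
  have \<Phi>_Sum: "\<Phi> (Sum_any (\<lambda>p. tens (YH (bas a) (bas c) p) (YV (bas b) (bas d) (j - p))))
      = Sum_any (\<lambda>q. sc ((- 1) powi i) (tens (YHU (YH (bas a) (bas c) q) u i) (YV (bas b) (bas d) (j - q))))"
    for a b c d
    using lin_Sum_any[OF _ finite_support_tens_conv[OF laurent_YH laurent_YV], of \<Phi>]
    by (simp add: \<Phi>_def[symmetric] \<Phi>_tens) (simp add: \<Phi>_def)
  have "R (tens (YV v v' j) u) i = \<Phi> (\<rho> (YV v v' j))"
    by (simp add: Rsmash_tens \<Phi>_def)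
  also have "\<dots> = lmap (\<lambda>(a, b). lmap (\<lambda>(c, d).
      \<Phi> (Sum_any (\<lambda>p. tens (YH (bas a) (bas c) p) (YV (bas b) (bas d) (j - p))))) (\<rho> v')) (\<rho> v)"
    by (simp add: rho_YV Ytens_def lmap2_def \<Phi>_def lmap_lmap split_def)
  finally show ?thesis by (simp add: \<Phi>_Sum)
qed

lemma hexagon2_coeff_sum:
  "Sum_any (\<lambda>q. sc ((- 1) powi i) (tens (YHU (YH h h' q) u i) (YV y y' (j - q))))
   = Sum_any (\<lambda>q. Sum_any (\<lambda>p. if 0 \<le> q then sc ((- 1) powi i * (of_int (i - p + q) gchoose nat q))
       (tens (YHU h (YHU h' u p) (i - p + q)) (YV y y' (j - q))) else 0))"
proof (rule Sum_any.cong)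
  fix q
  have fin: "finite {p. sc (of_int (i - p + q) gchoose nat q) (YHU h (YHU h' u p) (i - p + q)) \<noteq> 0}"
    by (rule finite_subset[OF _ finite_support_YHU_YHU[of h h' u "i + q"]]) (auto simp: algebra_simps)
  have lin: "lin (\<lambda>x. sc ((- 1) powi i) (tens x (YV y y' (j - q))))"
    by (intro lin_scI lin_tens_left)
  show "sc ((- 1) powi i) (tens (YHU (YH h h' q) u i) (YV y y' (j - q)))
    = Sum_any (\<lambda>p. if 0 \<le> q then sc ((- 1) powi i * (of_int (i - p + q) gchoose nat q))
        (tens (YHU h (YHU h' u p) (i - p + q)) (YV y y' (j - q))) else 0)"
    by (cases "0 \<le> q") (simp_all add: YHU_YH lin_Sum_any[OF lin fin] tens_sc_left del: of_int_add of_int_diff)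
qed

lemma R_YV_tens:
  "R (tens (YV v v' j) u) i =
   comp2 (in_x2 (op23 (Ylin YV))) (comp2 (at_minus (op12r R)) (ser_x1 (op23 R (tens v (tens v' u))))) i j"
  unfolding hexagon2_lhs hexagon2_coeff_sum hexagon2_rhs
  by (simp add: split_def lmap_swap[of _ "\<rho> v'" "\<rho> v"])

end

theorem proposition4p4:
  fixes vacH :: "'h vec" and YH :: "'h vec \<Rightarrow> 'h vec \<Rightarrow> int \<Rightarrow> 'h vec"
    and \<Delta> :: "'h vec \<Rightarrow> ('h \<times> 'h) vec" and \<epsilon> :: "'h vec \<Rightarrow> complex"
    and vacU :: "'u vec" and YU :: "'u vec \<Rightarrow> 'u vec \<Rightarrow> int \<Rightarrow> 'u vec"
    and YHU :: "'h vec \<Rightarrow> 'u vec \<Rightarrow> int \<Rightarrow> 'u vec"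
    and vacV :: "'v vec" and YV :: "'v vec \<Rightarrow> 'v vec \<Rightarrow> int \<Rightarrow> 'v vec"
    and \<rho> :: "'v vec \<Rightarrow> ('h \<times> 'v) vec"
  assumes "nonlocal_vertex_bialgebra vacH YH \<Delta> \<epsilon>"
    and "module_algebra vacH YH \<Delta> \<epsilon> vacU YU YHU"
    and "comodule_algebra vacH YH \<Delta> \<epsilon> vacV YV \<rho>"
  shows "twisting_operator vacU YU vacV YV (Rsmash YHU \<rho>)
         \<and> Ysmash YU YV YHU \<rho> = Ytwisted YU YV (Rsmash YHU \<rho>)"
proof -
  interpret smash vacH YH \<Delta> \<epsilon> vacU YU YHU vacV YV \<rho>
    using assms by unfold_locales
  have "twisting_operator vacU YU vacV YV R"
    unfolding twisting_operator_def linS_def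
    using lin_R fin_laurent_R R_vacU R_vacV R_tens_YU R_YV_tens by blast
  then show ?thesis using smash_eq_twisted by blast
qed

end
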